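(* Let $R$ be a ring and $(A_{i,r})$ a double complex of $R$-modules with all columns exact, and form its total complex with respect to $\Sigma=\prod$ (so $A_n=\prod_i A_{i,n-i}$). Then for each $n$ there is a short exact sequence $$0\to\operatorname{PB}(H^{\mathrm{tot}}(A_n))\to H^{\mathrm{tot}}(A_n)\to\varprojlim_{i\to\infty}(A_{i,n-i})_\square\to 0,$$ where the inverse limit is over the system with maps $(A_{i+1,n-i-1})_\square\to(A_{i,n-i})_\square$ given by $\bar\delta_1^{-1}\circ\bar\delta_2$, with $\bar\delta_2:(A_{i+1,n-i-1})_\square\to{}^\square A_{i+1,n-i}$ the extramural map of the horizontal arrow $A_{i+1,n-i-1}\to A_{i+1,n-i}$ and $\bar\delta_1:(A_{i,n-i})_\square\to{}^\square A_{i+1,n-i}$ the extramural map of the vertical arrow $A_{i,n-i}\to A_{i+1,n-i}$ (an isomorphism). This inverse limit is also isomorphic to the inverse limit of the corresponding system of receptors ${}^\square A_{i,n-i+1}$, and to $\ker(\bar\delta:A_{n\square}\to{}^\square A_{n+1})$; and $\operatorname{PB}(H^{\mathrm{tot}}(A_n))$ equals the image of the intramural map ${}^\square A_n\to H^{\mathrm{tot}}(A_n)$, isomorphic to $\operatorname{coker}(\bar\delta:A_{n-1\,\square}\to{}^\square A_n)$.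
   Context: A double complex of $R$-modules is a family $A_{i,r}$ $(i,r\in\mathbb{Z})$ ($i$ = row index increasing downward, $r$ = column index increasing rightward) with vertical maps $\delta_1:A_{i,r}\to A_{i+1,r}$ and horizontal maps $\delta_2:A_{i,r}\to A_{i,r+1}$, $\delta_1\delta_1=0$, $\delta_2\delta_2=0$, $\delta_1\delta_2=\delta_2\delta_1$. For an object $A$, with $d,e$ the horizontal maps into/out of $A$, $c,f$ the vertical maps into/out of $A$, $p$ the composite of two arrows ending at $A$, $q$ the composite of two arrows starting at $A$: receptor ${}^\square A=(\ker e\cap\ker f)/\operatorname{im}p$, donor $A_\square=\ker q/(\operatorname{im}c+\operatorname{im}d)$; an arrow $A\to B$ induces the "extramural" map $A_\square\to{}^\square B$. Total complex: $A_n=\prod_i A_{i,n-i}$, $\delta=\delta_2+(-1)^n\delta_1:A_n\to A_{n+1}$ (computed componentwise), $H^{\mathrm{tot}}(A_n)=\ker\delta/\operatorname{im}\delta$. $A_{n\square}=\prod_i(A_{i,n-i})_\square$, ${}^\square A_n=\prod_i{}^\square A_{i,n-i}$; $\bar\delta_1,\bar\delta_2:A_{n\square}\to{}^\square A_{n+1}$ are the products of the extramural maps of vertical, respectively horizontal, arrows; $\bar\delta=\bar\delta_2+(-1)^n\bar\delta_1$; the intramural map ${}^\square A_n\to H^{\mathrm{tot}}(A_n)$ is induced by the identity of $A_n$. An element $x\in H^{\mathrm{tot}}(A_n)$ is a "peekaboo element" if for every finite set $I\subseteq\mathbb{Z}$, $x$ is represented by a cycle $(x_i)\in A_n$ with $x_i=0$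 for all $i\in I$; these form a submodule $\operatorname{PB}(H^{\mathrm{tot}}(A_n))$. *)

theory Defs
  imports Main
begin

record ('r, 'a) rmod =
  carr  :: "'a set"
  madd  :: "'a \<Rightarrow> 'a \<Rightarrow> 'a"
  mzero :: "'a"
  msmul :: "'r \<Rightarrow> 'a \<Rightarrow> 'a"

definition is_rmod :: "('r::ring_1, 'a) rmod \<Rightarrow> bool" where
  "is_rmod M \<longleftrightarrow>
     mzero M \<in> carr M \<and>
     (\<forall>x\<in>carr M. \<forall>y\<in>carr M. madd M x y \<in> carr M) \<and>
     (\<forall>x\<in>carr M. \<forall>y\<in>carr M. \<forall>z\<in>carr M. madd M (madd M x y) z = madd M x (madd M y z)) \<and>
     (\<forall>x\<in>carr M. \<forall>y\<in>carr M. madd M x y = madd M y x) \<and>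
     (\<forall>x\<in>carr M. madd M (mzero M) x = x) \<and>
     (\<forall>x\<in>carr M. \<exists>y\<in>carr M. madd M x y = mzero M) \<and>
     (\<forall>a. \<forall>x\<in>carr M. msmul M a x \<in> carr M) \<and>
     (\<forall>a. \<forall>x\<in>carr M. \<forall>y\<in>carr M. msmul M a (madd M x y) = madd M (msmul M a x) (msmul M a y)) \<and>
     (\<forall>a b. \<forall>x\<in>carr M. msmul M (a + b) x = madd M (msmul M a x) (msmul M b x)) \<and>
     (\<forall>a b. \<forall>x\<in>carr M. msmul M (a * b) x = msmul M a (msmul M b x)) \<and>
     (\<forall>x\<in>carr M. msmul M 1 x = x)"

definition rmod_hom :: "('r, 'a) rmod \<Rightarrow> ('r, 'b) rmod \<Rightarrow> ('a \<Rightarrow> 'b) \<Rightarrow> bool" where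
  "rmod_hom M N f \<longleftrightarrow>
     f ` carr M \<subseteq> carr N \<and>
     (\<forall>x\<in>carr M. \<forall>y\<in>carr M. f (madd M x y) = madd N (f x) (f y)) \<and>
     (\<forall>a. \<forall>x\<in>carr M. f (msmul M a x) = msmul N a (f x))"

definition rmod_iso :: "('r, 'a) rmod \<Rightarrow> ('r, 'b) rmod \<Rightarrow> ('a \<Rightarrow> 'b) \<Rightarrow> bool" where
  "rmod_iso M N f \<longleftrightarrow> rmod_hom M N f \<and> bij_betw f (carr M) (carr N)"

definition mker :: "('r, 'a) rmod \<Rightarrow> ('r, 'b) rmod \<Rightarrow> ('a \<Rightarrow> 'b) \<Rightarrow> 'a set" where
  "mker M N f = {x \<in> carr M. f x = mzero N}"

definition sub_rmod :: "('r, 'a) rmod \<Rightarrow> 'a set \<Rightarrow> ('r, 'a) rmod" where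
  "sub_rmod M S = M\<lparr>carr := S\<rparr>"

definition qcls :: "('r, 'a) rmod \<Rightarrow> 'a set \<Rightarrow> 'a \<Rightarrow> 'a set" where
  "qcls M N x = {madd M x n | n. n \<in> N}"

definition quot_rmod :: "('r, 'a) rmod \<Rightarrow> 'a set \<Rightarrow> ('r, 'a set) rmod" where
  "quot_rmod M N =
     \<lparr> carr = qcls M N ` carr M,
       madd = (\<lambda>X Y. {madd M x y | x y. x \<in> X \<and> y \<in> Y}),
       mzero = qcls M N (mzero M),
       msmul = (\<lambda>a X. {madd M (msmul M a x) n | x n. x \<in> X \<and> n \<in> N}) \<rparr>"

definition sset :: "('r, 'a) rmod \<Rightarrow> 'a set \<Rightarrow> 'a set \<Rightarrow> 'a set" where
  "sset M U V = {madd M u v | u v. u \<in> U \<and> v \<in> V}"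

definition prod_rmod :: "(int \<Rightarrow> ('r, 'a) rmod) \<Rightarrow> ('r, int \<Rightarrow> 'a) rmod" where
  "prod_rmod Ms =
     \<lparr> carr = {x. \<forall>i. x i \<in> carr (Ms i)},
       madd = (\<lambda>x y i. madd (Ms i) (x i) (y i)),
       mzero = (\<lambda>i. mzero (Ms i)),
       msmul = (\<lambda>a x i. msmul (Ms i) a (x i)) \<rparr>"

text \<open>Inverse limit of a tower (X_i), maps phi i : X_(i+1) -> X_i, i in Z:
  compatible families. (Cofinal in i -> infinity, so this is lim_(i->oo).)\<close>
definition invlim :: "(int \<Rightarrow> ('r, 'a) rmod) \<Rightarrow> (int \<Rightarrow> 'a \<Rightarrow> 'a) \<Rightarrow> ('r, int \<Rightarrow> 'a) rmod" where
  "invlim Xs phi =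
     sub_rmod (prod_rmod Xs) {x \<in> carr (prod_rmod Xs). \<forall>i. x i = phi i (x (i + 1))}"

text \<open>A i r is the module in row i, column r; d1 i r : A i r -> A (i+1) r (vertical),
  d2 i r : A i r -> A i (r+1) (horizontal).\<close>
definition double_complex ::
  "(int \<Rightarrow> int \<Rightarrow> ('r::ring_1, 'm) rmod) \<Rightarrow> (int \<Rightarrow> int \<Rightarrow> 'm \<Rightarrow> 'm) \<Rightarrow> (int \<Rightarrow> int \<Rightarrow> 'm \<Rightarrow> 'm) \<Rightarrow> bool" where
  "double_complex A d1 d2 \<longleftrightarrow>
     (\<forall>i r. is_rmod (A i r)) \<and>
     (\<forall>i r. rmod_hom (A i r) (A (i + 1) r) (d1 i r)) \<and>
     (\<forall>i r. rmod_hom (A i r) (A i (r + 1)) (d2 i r)) \<and>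
     (\<forall>i r. \<forall>x\<in>carr (A i r). d1 (i + 1) r (d1 i r x) = mzero (A (i + 2) r)) \<and>
     (\<forall>i r. \<forall>x\<in>carr (A i r). d2 i (r + 1) (d2 i r x) = mzero (A i (r + 2))) \<and>
     (\<forall>i r. \<forall>x\<in>carr (A i r). d1 i (r + 1) (d2 i r x) = d2 (i + 1) r (d1 i r x))"

definition columns_exact ::
  "(int \<Rightarrow> int \<Rightarrow> ('r, 'm) rmod) \<Rightarrow> (int \<Rightarrow> int \<Rightarrow> 'm \<Rightarrow> 'm) \<Rightarrow> bool" where
  "columns_exact A d1 \<longleftrightarrow>
     (\<forall>i r. {x \<in> carr (A i r). d1 i r x = mzero (A (i + 1) r)} = d1 (i - 1) r ` carr (A (i - 1) r))"

text \<open>Denominator of the receptor: image of the composite of two arrows ending at A i r.\<close>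
definition recden where
  "recden A d1 d2 i r = (\<lambda>x. d1 (i - 1) r (d2 (i - 1) (r - 1) x)) ` carr (A (i - 1) (r - 1))"

definition receptor ::
  "(int \<Rightarrow> int \<Rightarrow> ('r, 'm) rmod) \<Rightarrow> (int \<Rightarrow> int \<Rightarrow> 'm \<Rightarrow> 'm) \<Rightarrow> (int \<Rightarrow> int \<Rightarrow> 'm \<Rightarrow> 'm)
     \<Rightarrow> int \<Rightarrow> int \<Rightarrow> ('r, 'm set) rmod" where
  "receptor A d1 d2 i r =
     quot_rmod (sub_rmod (A i r) {x \<in> carr (A i r). d2 i r x = mzero (A i (r + 1)) \<and> d1 i r x = mzero (A (i + 1) r)})
               (recden A d1 d2 i r)"

definition donor ::
  "(int \<Rightarrow> int \<Rightarrow> ('r, 'm) rmod) \<Rightarrow> (int \<Rightarrow> int \<Rightarrow> 'm \<Rightarrow> 'm) \<Rightarrow> (int \<Rightarrow> int \<Rightarrow> 'm \<Rightarrow> 'm)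
     \<Rightarrow> int \<Rightarrow> int \<Rightarrow> ('r, 'm set) rmod" where
  "donor A d1 d2 i r =
     quot_rmod (sub_rmod (A i r) {x \<in> carr (A i r). d1 i (r + 1) (d2 i r x) = mzero (A (i + 1) (r + 1))})
               (sset (A i r) (d1 (i - 1) r ` carr (A (i - 1) r)) (d2 i (r - 1) ` carr (A i (r - 1))))"

text \<open>Extramural maps, induced on representatives by the arrow:
  ext_v i r : (A i r)_box -> box(A (i+1) r), ext_h i r : (A i r)_box -> box(A i (r+1)).\<close>
definition ext_v where
  "ext_v A d1 d2 i r X = qcls (A (i + 1) r) (recden A d1 d2 (i + 1) r) (d1 i r (SOME x. x \<in> X))"

definition ext_h where
  "ext_h A d1 d2 i r X = qcls (A i (r + 1)) (recden A d1 d2 i (r + 1)) (d2 i r (SOME x. x \<in> X))"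

definition tot :: "(int \<Rightarrow> int \<Rightarrow> ('r, 'm) rmod) \<Rightarrow> int \<Rightarrow> ('r, int \<Rightarrow> 'm) rmod" where
  "tot A n = prod_rmod (\<lambda>i. A i (n - i))"

definition totd :: "(int \<Rightarrow> int \<Rightarrow> ('r::ring_1, 'm) rmod) \<Rightarrow> (int \<Rightarrow> int \<Rightarrow> 'm \<Rightarrow> 'm) \<Rightarrow> (int \<Rightarrow> int \<Rightarrow> 'm \<Rightarrow> 'm)
     \<Rightarrow> int \<Rightarrow> (int \<Rightarrow> 'm) \<Rightarrow> (int \<Rightarrow> 'm)" where
  "totd A d1 d2 n x =
     (\<lambda>i. madd (A i (n + 1 - i)) (d2 i (n - i) (x i))
            (msmul (A i (n + 1 - i)) ((-1) ^ nat \<bar>n\<bar>) (d1 (i - 1) (n - i + 1) (x (i - 1)))))"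

definition boundaries where
  "boundaries A d1 d2 n = totd A d1 d2 (n - 1) ` carr (tot A (n - 1))"

definition cycles where
  "cycles A d1 d2 n = {x \<in> carr (tot A n). totd A d1 d2 n x = mzero (tot A (n + 1))}"

definition Htot where
  "Htot A d1 d2 n = quot_rmod (sub_rmod (tot A n) (cycles A d1 d2 n)) (boundaries A d1 d2 n)"

definition PB where
  "PB A d1 d2 n = {X \<in> carr (Htot A d1 d2 n).
      \<forall>I. finite I \<longrightarrow> (\<exists>x\<in>X. \<forall>i\<in>I. x i = mzero (A i (n - i)))}"

definition donprod where
  "donprod A d1 d2 n = prod_rmod (\<lambda>i. donor A d1 d2 i (n - i))"

definition recprod where
  "recprod A d1 d2 n = prod_rmod (\<lambda>i. receptor A d1 d2 i (n - i))"

definition dbar1 where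
  "dbar1 A d1 d2 n X = (\<lambda>i. ext_v A d1 d2 (i - 1) (n - i + 1) (X (i - 1)))"

definition dbar2 where
  "dbar2 A d1 d2 n X = (\<lambda>i. ext_h A d1 d2 i (n - i) (X i))"

definition dbar where
  "dbar A d1 d2 n X =
     (\<lambda>i. madd (receptor A d1 d2 i (n + 1 - i)) (dbar2 A d1 d2 n X i)
            (msmul (receptor A d1 d2 i (n + 1 - i)) ((-1) ^ nat \<bar>n\<bar>) (dbar1 A d1 d2 n X i)))"

text \<open>Intramural map box(A_n) -> H^tot(A_n), induced by the identity.\<close>
definition intramural where
  "intramural A d1 d2 n Y =
     qcls (tot A n) (boundaries A d1 d2 n) (\<lambda>i. SOME y. y \<in> Y i)"

definition donor_lim where
  "donor_lim A d1 d2 n =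
     invlim (\<lambda>i. donor A d1 d2 i (n - i))
       (\<lambda>i. the_inv_into (carr (donor A d1 d2 i (n - i))) (ext_v A d1 d2 i (n - i))
              \<circ> ext_h A d1 d2 (i + 1) (n - i - 1))"

definition receptor_lim where
  "receptor_lim A d1 d2 n =
     invlim (\<lambda>i. receptor A d1 d2 i (n - i + 1))
       (\<lambda>i. ext_h A d1 d2 i (n - i)
              \<circ> the_inv_into (carr (donor A d1 d2 i (n - i))) (ext_v A d1 d2 i (n - i)))"

definition dbar_ker where
  "dbar_ker A d1 d2 n =
     sub_rmod (donprod A d1 d2 n) (mker (donprod A d1 d2 n) (recprod A d1 d2 (n + 1)) (dbar A d1 d2 n))"

definition dbar_coker where
  "dbar_coker A d1 d2 n =
     quot_rmod (recprod A d1 d2 n) (dbar A d1 d2 (n - 1) ` carr (donprod A d1 d2 (n - 1)))"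

end

theory Submission
  imports Defs
begin

(*
  The central map hmap sends a total cohomology class to the family of donor classes of the
  components of a representing cycle.  Since dbar on such families is computed by the total
  differential, hmap lands in ker dbar, and it is onto: a lift of a dbar-cycle is corrected to a
  total cycle by vertical images.  Its kernel is the set PB of peekaboo elements, which is also
  the image of the intramural map: representatives with all components in receptor numerators
  can have any finite window cleared by elementary boundaries, and conversely a cycle with all
  components in donor denominators differs from such a representative by a boundary.  A sign
  twist identifies ker dbar with the donor limit, the shifted vertical extramural maps identify
  donor and receptor limits, and the first isomorphism theorem for the intramural map, whose
  kernel is the image of dbar in degree n - 1, identifies PB with coker dbar.
*)

section \<open>Modules, submodules and quotients\<close>

definition mneg :: "('r::ring_1, 'a) rmod \<Rightarrow> 'a \<Rightarrow> 'a" where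
  "mneg M x = msmul M (-1) x"

definition submod :: "('r::ring_1, 'a) rmod \<Rightarrow> 'a set \<Rightarrow> bool" where
  "submod M N \<longleftrightarrow> N \<subseteq> carr M \<and> mzero M \<in> N \<and> (\<forall>x\<in>N. \<forall>y\<in>N. madd M x y \<in> N) \<and> (\<forall>a. \<forall>x\<in>N. msmul M a x \<in> N)"

context
  fixes M :: "('r::ring_1, 'a) rmod"
  assumes M: "is_rmod M"
begin

lemma rm_zero[simp]: "mzero M \<in> carr M"
  using M by (auto simp: is_rmod_def)
lemma rm_add[simp]: "x \<in> carr M \<Longrightarrow> y \<in> carr M \<Longrightarrow> madd M x y \<in> carr M"
  using M by (auto simp: is_rmod_def)
lemma rm_assoc: "x \<in> carr M \<Longrightarrow> y \<in> carr M \<Longrightarrow> z \<in> carr M \<Longrightarrow> madd M (madd M x y) z = madd M x (madd M y z)"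
  using M by (auto simp: is_rmod_def)
lemma rm_comm: "x \<in> carr M \<Longrightarrow> y \<in> carr M \<Longrightarrow> madd M x y = madd M y x"
  using M by (auto simp: is_rmod_def)
lemma rm_lzero[simp]: "x \<in> carr M \<Longrightarrow> madd M (mzero M) x = x"
  using M by (auto simp: is_rmod_def)
lemma rm_rzero[simp]: "x \<in> carr M \<Longrightarrow> madd M x (mzero M) = x"
  using rm_comm[of x "mzero M"] by simp
lemma rm_inv: "x \<in> carr M \<Longrightarrow> \<exists>y\<in>carr M. madd M x y = mzero M"
  using M unfolding is_rmod_def by (elim conjE) blast
lemma rm_smul[simp]: "x \<in> carr M \<Longrightarrow> msmul M a x \<in> carr M"
  using M by (auto simp: is_rmod_def)
lemma rm_smul_add: "x \<in> carr M \<Longrightarrow> y \<in> carr M \<Longrightarrow> msmul M a (madd M x y) = madd M (msmul M a x) (msmul M a y)"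
  using M by (auto simp: is_rmod_def)
lemma rm_add_smul: "x \<in> carr M \<Longrightarrow> msmul M (a + b) x = madd M (msmul M a x) (msmul M b x)"
  using M by (auto simp: is_rmod_def)
lemma rm_smul_smul: "x \<in> carr M \<Longrightarrow> msmul M a (msmul M b x) = msmul M (a * b) x"
  using M by (auto simp: is_rmod_def)
lemma rm_one[simp]: "x \<in> carr M \<Longrightarrow> msmul M 1 x = x"
  using M by (auto simp: is_rmod_def)

lemma rm_cancel:
  assumes "x \<in> carr M" "y \<in> carr M" "z \<in> carr M" "madd M x y = madd M x z"
  shows "y = z"
proof -
  obtain x' where x': "x' \<in> carr M" "madd M x x' = mzero M" using rm_inv assms(1) by blast
  have "y = madd M (madd M x' x) y" using x' assms by (simp add: rm_comm)
  also have "\<dots> = madd M x' (madd M x z)" using x' assms by (simp add: rm_assoc)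
  also have "\<dots> = z" using x' assms by (simp add: rm_assoc[symmetric] rm_comm)
  finally show ?thesis .
qed

lemma rm_zero_smul[simp]: "x \<in> carr M \<Longrightarrow> msmul M 0 x = mzero M"
  using rm_cancel[of "msmul M 0 x" "msmul M 0 x" "mzero M"] rm_add_smul[of x 0 0] by simp

lemma rm_smul_zero[simp]: "msmul M a (mzero M) = mzero M"
  using rm_cancel[of "msmul M a (mzero M)" "msmul M a (mzero M)" "mzero M"]
    rm_smul_add[of "mzero M" "mzero M" a] by simp

lemma rm_neg_closed[simp]: "x \<in> carr M \<Longrightarrow> mneg M x \<in> carr M"
  by (simp add: mneg_def)

lemma rm_rneg[simp]: "x \<in> carr M \<Longrightarrow> madd M x (mneg M x) = mzero M"
  using rm_add_smul[of x 1 "-1"] by (simp add: mneg_def)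

lemma rm_lneg[simp]: "x \<in> carr M \<Longrightarrow> madd M (mneg M x) x = mzero M"
  using rm_comm[of "mneg M x" x] by simp

lemma rm_neg_neg[simp]: "x \<in> carr M \<Longrightarrow> mneg M (mneg M x) = x"
  by (simp add: mneg_def rm_smul_smul)

lemma rm_neg_zero[simp]: "mneg M (mzero M) = mzero M"
  by (simp add: mneg_def)

lemma rm_neg_unique:
  assumes x: "x \<in> carr M" and y: "y \<in> carr M" and e: "madd M x y = mzero M"
  shows "y = mneg M x"
  using rm_cancel[OF x y rm_neg_closed[OF x]] e x by simp

lemma rm_eq_iff:
  assumes x: "x \<in> carr M" and y: "y \<in> carr M"
  shows "x = y \<longleftrightarrow> madd M x (mneg M y) = mzero M"
proof
  assume "madd M x (mneg M y) = mzero M"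
  then have "mneg M y = mneg M x" using rm_neg_unique[of x "mneg M y"] x y by simp
  then show "x = y" using x y by (metis rm_neg_neg)
qed (use y in simp)

lemma rm_neg_smul: "x \<in> carr M \<Longrightarrow> msmul M (- a) x = mneg M (msmul M a x)"
  by (simp add: mneg_def rm_smul_smul)

lemma rm_smul_neg: "x \<in> carr M \<Longrightarrow> msmul M a (mneg M x) = mneg M (msmul M a x)"
  by (simp add: mneg_def rm_smul_smul)

lemma rm_neg_add: "x \<in> carr M \<Longrightarrow> y \<in> carr M \<Longrightarrow> mneg M (madd M x y) = madd M (mneg M x) (mneg M y)"
  by (simp add: mneg_def rm_smul_add)

lemma rm_lcomm: "x \<in> carr M \<Longrightarrow> y \<in> carr M \<Longrightarrow> z \<in> carr M \<Longrightarrow> madd M x (madd M y z) = madd M y (madd M x z)"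
  by (metis rm_add rm_assoc rm_comm)

lemma rm_diff_add: "x \<in> carr M \<Longrightarrow> y \<in> carr M \<Longrightarrow> madd M (madd M x (mneg M y)) y = x"
  by (simp add: rm_assoc)

lemma rm_add_diff2: "x \<in> carr M \<Longrightarrow> y \<in> carr M \<Longrightarrow> madd M (madd M y x) (mneg M y) = x"
  by (simp add: rm_comm[of y x] rm_assoc)

lemma rm_mid: "x \<in> carr M \<Longrightarrow> y \<in> carr M \<Longrightarrow> madd M y (madd M x (mneg M y)) = x"
  by (simp add: rm_lcomm[of y x])

lemma rm_diff_self: "x \<in> carr M \<Longrightarrow> y \<in> carr M \<Longrightarrow> madd M (madd M x (mneg M y)) (mneg M x) = mneg M y"
  by (metis rm_add_diff2 rm_comm rm_neg_closed)

lemma rm_add4: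
  "a \<in> carr M \<Longrightarrow> b \<in> carr M \<Longrightarrow> c \<in> carr M \<Longrightarrow> d \<in> carr M \<Longrightarrow>
   madd M (madd M a b) (madd M c d) = madd M (madd M a c) (madd M b d)"
  by (simp add: rm_assoc rm_lcomm[of b c d])

lemma rm_unit_smul_zero:
  assumes x: "x \<in> carr M" and u: "b * a = 1"
  shows "msmul M a x = mzero M \<longleftrightarrow> x = mzero M"
  using rm_smul_smul[OF x, of b a] u x by auto

lemma rm_smul_sum_zero: "x \<in> carr M \<Longrightarrow> a + b = 0 \<Longrightarrow> madd M (msmul M a x) (msmul M b x) = mzero M"
  using rm_add_smul[of x a b] by simp

end

lemma submodD:
  assumes "submod M N"
  shows "N \<subseteq> carr M" "mzero M \<in> N" "x \<in> N \<Longrightarrow> y \<in> N \<Longrightarrow> madd M x y \<in> N" "x \<in> N \<Longrightarrow> msmul M a x \<in> N"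
  using assms by (auto simp: submod_def)

lemma submod_neg: "submod M N \<Longrightarrow> x \<in> N \<Longrightarrow> mneg M x \<in> N"
  by (simp add: mneg_def submodD)

lemma submod_carr: "is_rmod M \<Longrightarrow> submod M (carr M)"
  by (simp add: submod_def)

lemma submod_int: "submod M U \<Longrightarrow> submod M V \<Longrightarrow> submod M (U \<inter> V)"
  by (auto simp: submod_def)

lemma submod_sub: "submod M N \<Longrightarrow> N \<subseteq> S \<Longrightarrow> submod (sub_rmod M S) N"
  by (auto simp: submod_def sub_rmod_def)

lemma sub_rmod_simps[simp]:
  "carr (sub_rmod M S) = S" "madd (sub_rmod M S) = madd M"
  "mzero (sub_rmod M S) = mzero M" "msmul (sub_rmod M S) = msmul M"
  by (auto simp: sub_rmod_def)

lemma mneg_sub[simp]: "mneg (sub_rmod M S) = mneg M"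
  by (simp add: mneg_def fun_eq_iff)

lemma qcls_sub_rmod[simp]: "qcls (sub_rmod M S) N = qcls M N"
  by (simp add: qcls_def fun_eq_iff)

lemma submod_rmod:
  assumes M: "is_rmod M" and S: "submod M S"
  shows "is_rmod (sub_rmod M S)"
proof -
  have Sc: "S \<subseteq> carr M" using submodD(1)[OF S] .
  have "\<forall>x\<in>S. \<exists>y\<in>S. madd M x y = mzero M"
    using Sc submod_neg[OF S] rm_rneg[OF M] by blast
  then show ?thesis using M Sc submodD[OF S] unfolding is_rmod_def sub_rmod_def
    by (auto simp: subset_iff)
qed

lemma submod_sset:
  assumes M: "is_rmod M" and U: "submod M U" and V: "submod M V"
  shows "submod M (sset M U V)"
  unfolding submod_def
proof (intro conjI ballI allI)
  have Uc: "U \<subseteq> carr M" and Vc: "V \<subseteq> carr M" using submodD(1) U V by auto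
  show "sset M U V \<subseteq> carr M" using Uc Vc by (auto simp: sset_def intro!: rm_add[OF M])
  show "mzero M \<in> sset M U V" unfolding sset_def using submodD(2)[OF U] submodD(2)[OF V] M
    by (intro CollectI exI[of _ "mzero M"]) simp
  fix x y assume "x \<in> sset M U V" "y \<in> sset M U V"
  then obtain u v u' v' where uv: "u \<in> U" "v \<in> V" "u' \<in> U" "v' \<in> V" "x = madd M u v" "y = madd M u' v'"
    unfolding sset_def by auto
  have "madd M x y = madd M (madd M u u') (madd M v v')"
    using uv Uc Vc rm_add4[OF M, of u v u' v'] by auto
  then show "madd M x y \<in> sset M U V" unfolding sset_def
    using uv submodD(3)[OF U] submodD(3)[OF V] by blast
next
  have Uc: "U \<subseteq> carr M" and Vc: "V \<subseteq> carr M" using submodD(1) U V by auto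
  fix a x assume "x \<in> sset M U V"
  then obtain u v where uv: "u \<in> U" "v \<in> V" "x = madd M u v" unfolding sset_def by auto
  have "u \<in> carr M" "v \<in> carr M" using uv Uc Vc by auto
  then have "msmul M a x = madd M (msmul M a u) (msmul M a v)" using uv(3) rm_smul_add[OF M] by simp
  then show "msmul M a x \<in> sset M U V" unfolding sset_def
    using uv submodD(4)[OF U] submodD(4)[OF V] by blast
qed

context
  fixes M :: "('r::ring_1, 'a) rmod" and N
  assumes M: "is_rmod M" and N: "submod M N"
begin

lemma N_sub: "N \<subseteq> carr M"
  using N submodD by auto

lemma qcls_self: "x \<in> carr M \<Longrightarrow> x \<in> qcls M N x"
  unfolding qcls_def using submodD(2)[OF N] M by force

lemma qcls_le:
  assumes x: "x \<in> carr M" and y: "y \<in> carr M" and d: "madd M x (mneg M y) \<in> N"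
  shows "qcls M N x \<subseteq> qcls M N y"
proof
  fix z assume "z \<in> qcls M N x"
  then obtain m where m: "m \<in> N" "z = madd M x m" unfolding qcls_def by auto
  have mc: "m \<in> carr M" using m N_sub by auto
  have "madd M y (madd M (madd M x (mneg M y)) m) = madd M (madd M y (madd M x (mneg M y))) m"
    using M x y mc by (simp add: rm_assoc)
  also have "\<dots> = z" using m(2) M x y by (simp add: rm_mid)
  finally have "z = madd M y (madd M (madd M x (mneg M y)) m)" ..
  moreover have "madd M (madd M x (mneg M y)) m \<in> N" using d m submodD(3)[OF N] by auto
  ultimately show "z \<in> qcls M N y" unfolding qcls_def by auto
qed

lemma qcls_eq_iff:
  assumes x: "x \<in> carr M" and y: "y \<in> carr M"
  shows "qcls M N x = qcls M N y \<longleftrightarrow> madd M x (mneg M y) \<in> N"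
proof
  assume "qcls M N x = qcls M N y"
  then have "x \<in> qcls M N y" using qcls_self x by auto
  then obtain m where m: "m \<in> N" "x = madd M y m" unfolding qcls_def by auto
  then have "madd M x (mneg M y) = m" using N_sub M y by (simp add: rm_add_diff2 subset_iff)
  then show "madd M x (mneg M y) \<in> N" using m by simp
next
  assume d: "madd M x (mneg M y) \<in> N"
  have "madd M y (mneg M x) = mneg M (madd M x (mneg M y))"
    using M x y by (simp add: rm_neg_add rm_comm)
  then have "madd M y (mneg M x) \<in> N" using submod_neg[OF N d] by simp
  then show "qcls M N x = qcls M N y" using qcls_le[OF x y d] qcls_le[OF y x] x y by auto
qed

lemma qcls_eqI: "x \<in> carr M \<Longrightarrow> y \<in> carr M \<Longrightarrow> madd M x (mneg M y) \<in> N \<Longrightarrow> qcls M N x = qcls M N y"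
  using qcls_eq_iff by blast

lemma qcls_mem:
  assumes x: "x \<in> carr M" and y: "y \<in> qcls M N x"
  shows "y \<in> carr M" "qcls M N y = qcls M N x"
proof -
  obtain m where m: "m \<in> N" "y = madd M x m" using y unfolding qcls_def by auto
  show yc: "y \<in> carr M" using m N_sub M x by auto
  show "qcls M N y = qcls M N x"
    using m N_sub M x by (intro qcls_eqI[OF yc x]) (auto simp: rm_add_diff2 subset_iff)
qed

lemma qcls_some:
  assumes x: "x \<in> carr M"
  shows "(SOME y. y \<in> qcls M N x) \<in> carr M" "madd M (SOME y. y \<in> qcls M N x) (mneg M x) \<in> N"
proof -
  have s: "(SOME y. y \<in> qcls M N x) \<in> qcls M N x" using someI[of "\<lambda>y. y \<in> qcls M N x", OF qcls_self[OF x]] .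
  show "(SOME y. y \<in> qcls M N x) \<in> carr M" using qcls_mem(1)[OF x s] .
  show "madd M (SOME y. y \<in> qcls M N x) (mneg M x) \<in> N"
    using qcls_mem[OF x s] qcls_eq_iff x by blast
qed

lemma quot_carr: "carr (quot_rmod M N) = qcls M N ` carr M"
  by (simp add: quot_rmod_def)

lemma quot_zero: "mzero (quot_rmod M N) = qcls M N (mzero M)"
  by (simp add: quot_rmod_def)

lemma quot_add:
  assumes x: "x \<in> carr M" and y: "y \<in> carr M"
  shows "madd (quot_rmod M N) (qcls M N x) (qcls M N y) = qcls M N (madd M x y)"
proof -
  have "{madd M x' y' |x' y'. x' \<in> qcls M N x \<and> y' \<in> qcls M N y} = qcls M N (madd M x y)"
  proof (intro equalityI subsetI)
    fix z assume "z \<in> {madd M x' y' |x' y'. x' \<in> qcls M N x \<and> y' \<in> qcls M N y}"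
    then obtain m m' where m: "m \<in> N" "m' \<in> N" "z = madd M (madd M x m) (madd M y m')"
      unfolding qcls_def by auto
    moreover have "m \<in> carr M" "m' \<in> carr M" using m N_sub by auto
    ultimately have "z = madd M (madd M x y) (madd M m m')" using x y M by (simp add: rm_add4)
    then show "z \<in> qcls M N (madd M x y)" unfolding qcls_def using submodD(3)[OF N m(1,2)] by auto
  next
    fix z assume "z \<in> qcls M N (madd M x y)"
    then obtain m where m: "m \<in> N" "z = madd M (madd M x y) m" unfolding qcls_def by auto
    moreover have mc: "m \<in> carr M" using m N_sub by auto
    ultimately have "z = madd M (madd M x m) (madd M y (mzero M))"
      using rm_add4[OF M x mc y rm_zero[OF M]] M x y by simp
    then show "z \<in> {madd M x' y' |x' y'. x' \<in> qcls M N x \<and> y' \<in> qcls M N y}"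
      unfolding qcls_def using m submodD(2)[OF N] by blast
  qed
  then show ?thesis by (simp add: quot_rmod_def)
qed

lemma quot_smul:
  assumes x: "x \<in> carr M"
  shows "msmul (quot_rmod M N) a (qcls M N x) = qcls M N (msmul M a x)"
proof -
  have "{madd M (msmul M a x') n |x' n. x' \<in> qcls M N x \<and> n \<in> N} = qcls M N (msmul M a x)"
  proof (intro equalityI subsetI)
    fix z assume "z \<in> {madd M (msmul M a x') n |x' n. x' \<in> qcls M N x \<and> n \<in> N}"
    then obtain m n where m: "m \<in> N" "n \<in> N" "z = madd M (msmul M a (madd M x m)) n"
      unfolding qcls_def by auto
    moreover have "m \<in> carr M" "n \<in> carr M" using m N_sub by auto
    ultimately have "z = madd M (msmul M a x) (madd M (msmul M a m) n)"
      using x M by (simp add: rm_assoc rm_smul_add)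
    moreover have "madd M (msmul M a m) n \<in> N" using submodD(3,4)[OF N] m by auto
    ultimately show "z \<in> qcls M N (msmul M a x)" unfolding qcls_def by auto
  next
    fix z assume "z \<in> qcls M N (msmul M a x)"
    then obtain m where "m \<in> N" "z = madd M (msmul M a x) m" unfolding qcls_def by auto
    then show "z \<in> {madd M (msmul M a x') n |x' n. x' \<in> qcls M N x \<and> n \<in> N}"
      using qcls_self[OF x] by blast
  qed
  then show ?thesis by (simp add: quot_rmod_def)
qed

lemma quot_rep:
  assumes "X \<in> carr (quot_rmod M N)"
  shows "(SOME x. x \<in> X) \<in> carr M" "qcls M N (SOME x. x \<in> X) = X"
proof -
  obtain x where x: "x \<in> carr M" "X = qcls M N x" using assms by (auto simp: quot_carr)
  have s: "(SOME y. y \<in> qcls M N x) \<in> qcls M N x" using someI[of "\<lambda>y. y \<in> qcls M N x", OF qcls_self[OF x(1)]] .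
  show "(SOME x. x \<in> X) \<in> carr M" "qcls M N (SOME x. x \<in> X) = X"
    using qcls_mem[OF x(1) s] x(2) by simp_all
qed

lemma quot_cases:
  assumes "X \<in> carr (quot_rmod M N)"
  obtains x where "x \<in> carr M" "X = qcls M N x"
  using assms by (auto simp: quot_carr)

lemma quot_rmod: "is_rmod (quot_rmod M N)"
proof -
  let ?Q = "quot_rmod M N" and ?q = "qcls M N"
  have inQ: "\<And>x. x \<in> carr M \<Longrightarrow> ?q x \<in> carr ?Q" by (simp add: quot_carr)
  note ops = quot_add quot_smul quot_zero inQ
  show ?thesis unfolding is_rmod_def
  proof (intro conjI ballI allI)
    show "mzero ?Q \<in> carr ?Q" by (simp add: quot_zero inQ M)
  next
    fix X Y assume "X \<in> carr ?Q" "Y \<in> carr ?Q"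
    then obtain x y where xy: "x \<in> carr M" "y \<in> carr M" "X = ?q x" "Y = ?q y" by (metis quot_cases)
    show "madd ?Q X Y \<in> carr ?Q" using xy M by (simp add: ops)
    show "madd ?Q X Y = madd ?Q Y X" using xy M by (simp add: ops rm_comm[OF M xy(1,2)])
    show "msmul ?Q a (madd ?Q X Y) = madd ?Q (msmul ?Q a X) (msmul ?Q a Y)" for a
      using xy M by (simp add: ops rm_smul_add)
  next
    fix X Y Z assume "X \<in> carr ?Q" "Y \<in> carr ?Q" "Z \<in> carr ?Q"
    then obtain x y z where "x \<in> carr M" "y \<in> carr M" "z \<in> carr M" "X = ?q x" "Y = ?q y" "Z = ?q z"
      by (metis quot_cases)
    then show "madd ?Q (madd ?Q X Y) Z = madd ?Q X (madd ?Q Y Z)" using M by (simp add: ops rm_assoc)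
  next
    fix X assume "X \<in> carr ?Q"
    then obtain x where x: "x \<in> carr M" "X = ?q x" by (metis quot_cases)
    show "madd ?Q (mzero ?Q) X = X" "msmul ?Q 1 X = X" "msmul ?Q a X \<in> carr ?Q"
      "msmul ?Q (a + b) X = madd ?Q (msmul ?Q a X) (msmul ?Q b X)"
      "msmul ?Q (a * b) X = msmul ?Q a (msmul ?Q b X)" for a b
      using x M by (simp_all add: ops rm_add_smul rm_smul_smul)
    show "\<exists>Y\<in>carr ?Q. madd ?Q X Y = mzero ?Q"
      using x M by (intro bexI[of _ "?q (mneg M x)"]) (simp_all add: ops)
  qed
qed

end

lemma homD:
  assumes "rmod_hom M N f"
  shows "x \<in> carr M \<Longrightarrow> f x \<in> carr N"
    "x \<in> carr M \<Longrightarrow> y \<in> carr M \<Longrightarrow> f (madd M x y) = madd N (f x) (f y)"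
    "x \<in> carr M \<Longrightarrow> f (msmul M a x) = msmul N a (f x)"
  using assms by (auto simp: rmod_hom_def)

lemma hom_zero:
  assumes M: "is_rmod M" and N: "is_rmod N" and f: "rmod_hom M N f"
  shows "f (mzero M) = mzero N"
  using homD(3)[OF f rm_zero[OF M], of 0] rm_zero_smul[OF M] rm_zero_smul[OF N] homD(1)[OF f] M by simp

lemma hom_neg: "rmod_hom M N f \<Longrightarrow> x \<in> carr M \<Longrightarrow> f (mneg M x) = mneg N (f x)"
  by (simp add: mneg_def homD)

lemma hom_diff:
  "is_rmod M \<Longrightarrow> rmod_hom M N f \<Longrightarrow> x \<in> carr M \<Longrightarrow> y \<in> carr M \<Longrightarrow>
   f (madd M x (mneg M y)) = madd N (f x) (mneg N (f y))"
  by (simp add: homD hom_neg)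

lemma hom_comp:
  assumes f: "rmod_hom M N f" and g: "rmod_hom N P g"
  shows "rmod_hom M P (\<lambda>x. g (f x))"
  unfolding rmod_hom_def using homD[OF f] homD[OF g] by auto

lemma submod_image:
  assumes M: "is_rmod M" and N: "is_rmod N" and f: "rmod_hom M N f" and S: "submod M S"
  shows "submod N (f ` S)"
  unfolding submod_def
proof (intro conjI ballI allI)
  have Sc: "S \<subseteq> carr M" using submodD(1)[OF S] .
  show "f ` S \<subseteq> carr N" using Sc homD(1)[OF f] by auto
  show "mzero N \<in> f ` S" using hom_zero[OF M N f] submodD(2)[OF S] by (metis image_eqI)
next
  have Sc: "S \<subseteq> carr M" using submodD(1)[OF S] .
  fix u v assume "u \<in> f ` S" "v \<in> f ` S"
  then obtain x y where "x \<in> S" "y \<in> S" "u = f x" "v = f y" by auto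
  then show "madd N u v \<in> f ` S" using homD(2)[OF f, of x y] Sc submodD(3)[OF S] by (metis image_eqI subsetD)
next
  have Sc: "S \<subseteq> carr M" using submodD(1)[OF S] .
  fix a u assume "u \<in> f ` S"
  then obtain x where "x \<in> S" "u = f x" by auto
  then show "msmul N a u \<in> f ` S" using homD(3)[OF f, of x a] Sc submodD(4)[OF S] by (metis image_eqI subsetD)
qed

lemma submod_kernel:
  assumes M: "is_rmod M" and N: "is_rmod N" and f: "rmod_hom M N f"
  shows "submod M {x \<in> carr M. f x = mzero N}"
  unfolding submod_def using hom_zero[OF M N f] homD[OF f] M N by auto

lemma prod_simps[simp]:
  "carr (prod_rmod Ms) = {x. \<forall>i. x i \<in> carr (Ms i)}"
  "madd (prod_rmod Ms) = (\<lambda>x y i. madd (Ms i) (x i) (y i))"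
  "mzero (prod_rmod Ms) = (\<lambda>i. mzero (Ms i))"
  "msmul (prod_rmod Ms) = (\<lambda>a x i. msmul (Ms i) a (x i))"
  by (simp_all add: prod_rmod_def)

lemma prod_mneg: "mneg (prod_rmod Ms) x = (\<lambda>i. mneg (Ms i) (x i))"
  by (simp add: mneg_def)

lemma prod_rmod:
  assumes Ms: "\<And>i. is_rmod (Ms i)"
  shows "is_rmod (prod_rmod Ms)"
  unfolding is_rmod_def
proof (intro conjI ballI allI)
  let ?P = "prod_rmod Ms"
  show "mzero ?P \<in> carr ?P" using Ms by simp
  fix x assume x: "x \<in> carr ?P"
  then have xi: "\<And>i. x i \<in> carr (Ms i)" by simp
  show "madd ?P (mzero ?P) x = x" "msmul ?P 1 x = x" "msmul ?P a x \<in> carr ?P"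
    "msmul ?P (a + b) x = madd ?P (msmul ?P a x) (msmul ?P b x)"
    "msmul ?P (a * b) x = msmul ?P a (msmul ?P b x)" for a b
    using xi Ms by (simp_all add: fun_eq_iff rm_add_smul rm_smul_smul)
  show "\<exists>y\<in>carr ?P. madd ?P x y = mzero ?P"
    using xi Ms by (intro bexI[of _ "\<lambda>i. mneg (Ms i) (x i)"]) (simp_all add: fun_eq_iff)
  fix y assume y: "y \<in> carr ?P"
  then have yi: "\<And>i. y i \<in> carr (Ms i)" by simp
  show "madd ?P x y \<in> carr ?P" using xi yi Ms by simp
  show "madd ?P x y = madd ?P y x" by (simp add: fun_eq_iff rm_comm[OF Ms xi yi])
  show "msmul ?P a (madd ?P x y) = madd ?P (msmul ?P a x) (msmul ?P a y)" for a
    using xi yi Ms by (simp add: fun_eq_iff rm_smul_add)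
  fix z assume "z \<in> carr ?P"
  then have zi: "\<And>i. z i \<in> carr (Ms i)" by simp
  show "madd ?P (madd ?P x y) z = madd ?P x (madd ?P y z)" by (simp add: fun_eq_iff rm_assoc[OF Ms xi yi zi])
qed

lemma levelwise_iso:
  assumes hom: "\<And>i. rmod_hom (Ms (\<sigma> i)) (Ns i) (f i)"
    and inj: "\<And>i. inj_on (f i) (carr (Ms (\<sigma> i)))"
    and \<sigma>: "surj \<sigma>"
    and C: "C \<subseteq> carr (prod_rmod Ms)"
    and img: "(\<lambda>Z i. f i (Z (\<sigma> i))) ` C = D"
  shows "rmod_iso (sub_rmod (prod_rmod Ms) C) (sub_rmod (prod_rmod Ns) D) (\<lambda>Z i. f i (Z (\<sigma> i)))"
proof -
  let ?F = "\<lambda>Z i. f i (Z (\<sigma> i))"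
  have Ci: "Z (\<sigma> i) \<in> carr (Ms (\<sigma> i))" if "Z \<in> C" for Z i using C that by auto
  have "rmod_hom (sub_rmod (prod_rmod Ms) C) (sub_rmod (prod_rmod Ns) D) ?F"
    unfolding rmod_hom_def using img Ci homD(2,3)[OF hom] by auto
  moreover have "inj_on ?F C"
  proof (rule inj_onI)
    fix Z W assume Z: "Z \<in> C" and W: "W \<in> C" and e: "?F Z = ?F W"
    have "Z (\<sigma> i) = W (\<sigma> i)" for i
      using fun_cong[OF e, of i] inj_onD[OF inj _ Ci[OF Z] Ci[OF W]] by simp
    then show "Z = W" using \<sigma> by (metis ext surjD)
  qed
  ultimately show ?thesis unfolding rmod_iso_def bij_betw_def using img by simp
qed

lemma qcls_kernel_eq:
  assumes M: "is_rmod M" and N: "is_rmod N" and F: "rmod_hom M N F"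
    and x: "x \<in> carr M" "x' \<in> carr M"
  shows "qcls M {x \<in> carr M. F x = mzero N} x = qcls M {x \<in> carr M. F x = mzero N} x' \<longleftrightarrow> F x = F x'"
proof -
  have "qcls M {x \<in> carr M. F x = mzero N} x = qcls M {x \<in> carr M. F x = mzero N} x'
      \<longleftrightarrow> F (madd M x (mneg M x')) = mzero N"
    using qcls_eq_iff[OF M submod_kernel[OF M N F] x] x M by simp
  also have "\<dots> \<longleftrightarrow> F x = F x'"
    using hom_diff[OF M F x] rm_eq_iff[OF N homD(1)[OF F x(1)] homD(1)[OF F x(2)]] by simp
  finally show ?thesis .
qed

lemma first_iso:
  assumes M: "is_rmod M" and N: "is_rmod N" and F: "rmod_hom M N F"
  shows "\<exists>f. rmod_iso (sub_rmod N (F ` carr M)) (quot_rmod M {x \<in> carr M. F x = mzero N}) f"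
proof -
  define K where "K = {x \<in> carr M. F x = mzero N}"
  define f where "f y = qcls M K (SOME x. x \<in> carr M \<and> F x = y)" for y
  have Ks: "submod M K" unfolding K_def using submod_kernel[OF M N F] .
  have cong: "qcls M K x = qcls M K x' \<longleftrightarrow> F x = F x'" if "x \<in> carr M" "x' \<in> carr M" for x x'
    unfolding K_def using qcls_kernel_eq[OF M N F that] .
  have key: "f (F x) = qcls M K x" if x: "x \<in> carr M" for x
  proof -
    let ?x = "SOME x'. x' \<in> carr M \<and> F x' = F x"
    have "?x \<in> carr M \<and> F ?x = F x"
      by (rule someI[of "\<lambda>x'. x' \<in> carr M \<and> F x' = F x" x]) (simp add: x)
    then show ?thesis unfolding f_def using cong[OF _ x, of ?x] by simp
  qed
  have "rmod_hom (sub_rmod N (F ` carr M)) (quot_rmod M K) f"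
    unfolding rmod_hom_def sub_rmod_simps
  proof (intro conjI ballI allI)
    show "f ` F ` carr M \<subseteq> carr (quot_rmod M K)" using key by (auto simp: quot_carr[OF M Ks])
  next
    fix y y' assume "y \<in> F ` carr M" "y' \<in> F ` carr M"
    then obtain x x' where xx: "x \<in> carr M" "x' \<in> carr M" "y = F x" "y' = F x'" by auto
    then have "madd N y y' = F (madd M x x')" using homD(2)[OF F] by simp
    then show "f (madd N y y') = madd (quot_rmod M K) (f y) (f y')"
      using xx key M by (simp add: quot_add[OF M Ks])
  next
    fix a y assume "y \<in> F ` carr M"
    then obtain x where xx: "x \<in> carr M" "y = F x" by auto
    then have "msmul N a y = F (msmul M a x)" using homD(3)[OF F] by simp
    then show "f (msmul N a y) = msmul (quot_rmod M K) a (f y)"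
      using xx key M by (simp add: quot_smul[OF M Ks])
  qed
  moreover have "inj_on f (F ` carr M)"
  proof (rule inj_onI)
    fix y y' assume "y \<in> F ` carr M" "y' \<in> F ` carr M" and e: "f y = f y'"
    then obtain x x' where "x \<in> carr M" "x' \<in> carr M" "y = F x" "y' = F x'" by auto
    then show "y = y'" using e key cong by metis
  qed
  moreover have "f ` (F ` carr M) = carr (quot_rmod M K)"
    unfolding quot_carr[OF M Ks] image_image using key by simp
  ultimately have "rmod_iso (sub_rmod N (F ` carr M)) (quot_rmod M K) f"
    unfolding rmod_iso_def bij_betw_def by simp
  then show ?thesis unfolding K_def by blast
qed

section \<open>Double complexes with exact columns\<close>

locale col_exact_dc =
  fixes A :: "int \<Rightarrow> int \<Rightarrow> ('r::ring_1, 'm) rmod" and d1 d2 :: "int \<Rightarrow> int \<Rightarrow> 'm \<Rightarrow> 'm"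
  assumes dc: "double_complex A d1 d2" and cex: "columns_exact A d1"
begin

text \<open>The identities of a double complex, also in the index-shifted forms that occur when an
  arrow ends (rather than starts) at A i r.\<close>

lemma Am[simp]: "is_rmod (A i r)" using dc by (simp add: double_complex_def)
lemma h1: "rmod_hom (A i r) (A (i+1) r) (d1 i r)" using dc by (simp add: double_complex_def)
lemma h2: "rmod_hom (A i r) (A i (r+1)) (d2 i r)" using dc by (simp add: double_complex_def)
lemma h1': "rmod_hom (A (i - 1) r) (A i r) (d1 (i - 1) r)" using h1[of "i - 1" r] by simp
lemma h2': "rmod_hom (A i (r - 1)) (A i r) (d2 i (r - 1))" using h2[of i "r - 1"] by simp

lemma d1_in[simp]: "x \<in> carr (A i r) \<Longrightarrow> d1 i r x \<in> carr (A (i+1) r)" using homD(1)[OF h1] .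
lemma d2_in[simp]: "x \<in> carr (A i r) \<Longrightarrow> d2 i r x \<in> carr (A i (r+1))" using homD(1)[OF h2] .
lemma d1_in'[simp]: "x \<in> carr (A (i - 1) r) \<Longrightarrow> d1 (i - 1) r x \<in> carr (A i r)" using homD(1)[OF h1'] .
lemma d2_in'[simp]: "x \<in> carr (A i (r - 1)) \<Longrightarrow> d2 i (r - 1) x \<in> carr (A i r)" using homD(1)[OF h2'] .
lemma d1_in_idx: "x \<in> carr (A i r) \<Longrightarrow> j = i + 1 \<Longrightarrow> d1 i r x \<in> carr (A j r)" by simp
lemma d2_in_idx: "x \<in> carr (A i r) \<Longrightarrow> s = r + 1 \<Longrightarrow> d2 i r x \<in> carr (A i s)" by simp

lemma d1_add: "x \<in> carr (A i r) \<Longrightarrow> y \<in> carr (A i r) \<Longrightarrow> d1 i r (madd (A i r) x y) = madd (A (i+1) r) (d1 i r x) (d1 i r y)"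
  using homD(2)[OF h1] .
lemma d2_add: "x \<in> carr (A i r) \<Longrightarrow> y \<in> carr (A i r) \<Longrightarrow> d2 i r (madd (A i r) x y) = madd (A i (r+1)) (d2 i r x) (d2 i r y)"
  using homD(2)[OF h2] .
lemma d1_smul: "x \<in> carr (A i r) \<Longrightarrow> d1 i r (msmul (A i r) a x) = msmul (A (i+1) r) a (d1 i r x)"
  using homD(3)[OF h1] .
lemma d2_smul: "x \<in> carr (A i r) \<Longrightarrow> d2 i r (msmul (A i r) a x) = msmul (A i (r+1)) a (d2 i r x)"
  using homD(3)[OF h2] .
lemma d1_zero[simp]: "d1 i r (mzero (A i r)) = mzero (A (i+1) r)" using hom_zero[OF Am Am h1] .
lemma d2_zero[simp]: "d2 i r (mzero (A i r)) = mzero (A i (r+1))" using hom_zero[OF Am Am h2] .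
lemma d1_neg: "x \<in> carr (A i r) \<Longrightarrow> d1 i r (mneg (A i r) x) = mneg (A (i+1) r) (d1 i r x)" using hom_neg[OF h1] .
lemma d2_neg: "x \<in> carr (A i r) \<Longrightarrow> d2 i r (mneg (A i r) x) = mneg (A i (r+1)) (d2 i r x)" using hom_neg[OF h2] .

text \<open>Integer normalization used to match A (i + 2) r with A (2 + i) r.\<close>
lemma two_plus[simp]: "2 + (i::int) = i + 2" by simp

lemma d11: "x \<in> carr (A i r) \<Longrightarrow> d1 (i + 1) r (d1 i r x) = mzero (A (i + 2) r)"
  using dc by (simp add: double_complex_def)
lemma d22: "x \<in> carr (A i r) \<Longrightarrow> d2 i (r + 1) (d2 i r x) = mzero (A i (r + 2))"
  using dc by (simp add: double_complex_def)
lemma d12: "x \<in> carr (A i r) \<Longrightarrow> d1 i (r + 1) (d2 i r x) = d2 (i + 1) r (d1 i r x)"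
  using dc by (simp add: double_complex_def)

lemma d11': "x \<in> carr (A (i - 1) r) \<Longrightarrow> d1 i r (d1 (i - 1) r x) = mzero (A (i + 1) r)"
proof -
  assume x: "x \<in> carr (A (i - 1) r)"
  have e: "i - 1 + 2 = i + 1" by simp
  show ?thesis using d11[OF x] e by simp
qed
lemma d22': "x \<in> carr (A i (r - 1)) \<Longrightarrow> d2 i r (d2 i (r - 1) x) = mzero (A i (r + 1))"
proof -
  assume x: "x \<in> carr (A i (r - 1))"
  have e: "r - 1 + 2 = r + 1" by simp
  show ?thesis using d22[OF x] e by simp
qed
lemma d12': "x \<in> carr (A (i - 1) r) \<Longrightarrow> d2 i r (d1 (i - 1) r x) = d1 (i - 1) (r + 1) (d2 (i - 1) r x)"
  using d12[of x "i - 1" r] by simp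
lemma exact: "x \<in> carr (A i r) \<Longrightarrow> d1 i r x = mzero (A (i + 1) r) \<Longrightarrow> \<exists>y\<in>carr (A (i - 1) r). x = d1 (i - 1) r y"
  using cex unfolding columns_exact_def by blast

lemma exact': "x \<in> carr (A (i + 1) r) \<Longrightarrow> d1 (i + 1) r x = mzero (A (i + 2) r) \<Longrightarrow> \<exists>y\<in>carr (A i r). x = d1 i r y"
proof -
  assume "x \<in> carr (A (i + 1) r)" "d1 (i + 1) r x = mzero (A (i + 2) r)"
  then have "\<exists>y\<in>carr (A (i + 1 - 1) r). x = d1 (i + 1 - 1) r y"
    using exact[of x "i + 1" r] by (simp add: add.assoc)
  then show ?thesis by simp
qed

text \<open>Variants in which the target row or column is given by an equation, so that they apply
  to index expressions that are equal to, but not literally of the form, i + 1.\<close>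
lemma d1_addg: "x \<in> carr (A i r) \<Longrightarrow> y \<in> carr (A i r) \<Longrightarrow> j = i + 1 \<Longrightarrow> d1 i r (madd (A i r) x y) = madd (A j r) (d1 i r x) (d1 i r y)"
  by (simp add: d1_add)
lemma d2_addg: "x \<in> carr (A i r) \<Longrightarrow> y \<in> carr (A i r) \<Longrightarrow> s = r + 1 \<Longrightarrow> d2 i r (madd (A i r) x y) = madd (A i s) (d2 i r x) (d2 i r y)"
  by (simp add: d2_add)
lemma d1_smulg: "x \<in> carr (A i r) \<Longrightarrow> j = i + 1 \<Longrightarrow> d1 i r (msmul (A i r) a x) = msmul (A j r) a (d1 i r x)"
  by (simp add: d1_smul)
lemma d2_smulg: "x \<in> carr (A i r) \<Longrightarrow> s = r + 1 \<Longrightarrow> d2 i r (msmul (A i r) a x) = msmul (A i s) a (d2 i r x)"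
  by (simp add: d2_smul)
lemma d1_zerog: "j = i + 1 \<Longrightarrow> d1 i r (mzero (A i r)) = mzero (A j r)" by simp
lemma d2_zerog: "s = r + 1 \<Longrightarrow> d2 i r (mzero (A i r)) = mzero (A i s)" by simp
lemma d11g: "x \<in> carr (A i r) \<Longrightarrow> j = i + 1 \<Longrightarrow> k = i + 2 \<Longrightarrow> d1 j r (d1 i r x) = mzero (A k r)"
  by (simp add: d11)
lemma d22g: "x \<in> carr (A i r) \<Longrightarrow> s = r + 1 \<Longrightarrow> t = r + 2 \<Longrightarrow> d2 i s (d2 i r x) = mzero (A i t)"
  by (simp add: d22)
lemma d12g: "x \<in> carr (A i r) \<Longrightarrow> j = i + 1 \<Longrightarrow> s = r + 1 \<Longrightarrow> d1 i s (d2 i r x) = d2 j r (d1 i r x)"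
  by (simp add: d12)

text \<open>The donor of A i r is SD i r / ND i r, with SD the kernel of the composite q of the two
  arrows leaving A i r and ND = im c + im d; the receptor is SR i r / NR i r, with SR the
  intersection of the kernels of the two outgoing arrows and NR the image of the composite p
  of the two incoming arrows.  dq and rq denote the quotient maps.\<close>

definition SD where "SD i r = {x \<in> carr (A i r). d1 i (r+1) (d2 i r x) = mzero (A (i+1) (r+1))}"
definition ND where "ND i r = sset (A i r) (d1 (i-1) r ` carr (A (i-1) r)) (d2 i (r-1) ` carr (A i (r-1)))"
definition SR where "SR i r = {x \<in> carr (A i r). d2 i r x = mzero (A i (r + 1)) \<and> d1 i r x = mzero (A (i + 1) r)}"
abbreviation NR where "NR i r \<equiv> recden A d1 d2 i r"

lemma donor_eq: "donor A d1 d2 i r = quot_rmod (sub_rmod (A i r) (SD i r)) (ND i r)"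
  by (simp add: donor_def SD_def ND_def)
lemma receptor_eq: "receptor A d1 d2 i r = quot_rmod (sub_rmod (A i r) (SR i r)) (NR i r)"
  by (simp add: receptor_def SR_def)

lemma ND_mem: "x \<in> ND i r \<longleftrightarrow> (\<exists>a\<in>carr (A (i - 1) r). \<exists>b\<in>carr (A i (r - 1)). x = madd (A i r) (d1 (i - 1) r a) (d2 i (r - 1) b))"
  unfolding ND_def sset_def by blast

lemma NR_mem: "x \<in> NR i r \<longleftrightarrow> (\<exists>c\<in>carr (A (i - 1) (r - 1)). x = d1 (i - 1) r (d2 (i - 1) (r - 1) c))"
  unfolding recden_def by blast

text \<open>Numerators and denominators are submodules, and each denominator lies in its numerator
  (d1 d2 vanishes on im c + im d; both outgoing arrows vanish on im p).\<close>
lemma hdd: "rmod_hom (A i r) (A (i+1) (r+1)) (\<lambda>x. d1 i (r+1) (d2 i r x))"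
  using hom_comp[OF h2 h1] .

lemma hdd': "rmod_hom (A (i - 1) (r - 1)) (A i r) (\<lambda>x. d1 (i - 1) r (d2 (i - 1) (r - 1) x))"
  using hdd[of "i - 1" "r - 1"] by simp

lemma SD_sub: "submod (A i r) (SD i r)"
  unfolding SD_def using submod_kernel[OF Am Am hdd] .

lemma ND_sub: "submod (A i r) (ND i r)"
  unfolding ND_def
  by (rule submod_sset[OF Am submod_image[OF Am Am h1' submod_carr[OF Am]] submod_image[OF Am Am h2' submod_carr[OF Am]]])

lemma SR_sub: "submod (A i r) (SR i r)"
proof -
  have "SR i r = {x \<in> carr (A i r). d2 i r x = mzero (A i (r + 1))} \<inter> {x \<in> carr (A i r). d1 i r x = mzero (A (i + 1) r)}"
    unfolding SR_def by auto
  then show ?thesis using submod_int[OF submod_kernel[OF Am Am h2] submod_kernel[OF Am Am h1]] by simp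
qed

lemma NR_sub: "submod (A i r) (NR i r)"
  unfolding recden_def using submod_image[OF Am Am hdd' submod_carr[OF Am]] .

lemma ND_SD: "ND i r \<subseteq> SD i r"
proof
  fix x assume "x \<in> ND i r"
  then obtain a b where ab: "a \<in> carr (A (i - 1) r)" "b \<in> carr (A i (r - 1))"
    "x = madd (A i r) (d1 (i - 1) r a) (d2 i (r - 1) b)" unfolding ND_mem by blast
  have "d2 i r x = madd (A i (r+1)) (d2 i r (d1 (i - 1) r a)) (d2 i r (d2 i (r - 1) b))"
    using ab by (simp add: d2_add)
  also have "\<dots> = d1 (i - 1) (r + 1) (d2 (i - 1) r a)" using ab by (simp add: d12' d22')
  finally have "d1 i (r + 1) (d2 i r x) = mzero (A (i + 1) (r + 1))" using ab by (simp add: d11')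
  moreover have "x \<in> carr (A i r)" using ab by simp
  ultimately show "x \<in> SD i r" unfolding SD_def by simp
qed

lemma NR_SR: "NR i r \<subseteq> SR i r"
proof
  fix x assume "x \<in> NR i r"
  then obtain c where c: "c \<in> carr (A (i - 1) (r - 1))" "x = d1 (i - 1) r (d2 (i - 1) (r - 1) c)"
    unfolding NR_mem by blast
  have dc: "d2 (i - 1) (r - 1) c \<in> carr (A (i - 1) r)" using c by simp
  have "d2 i r x = d1 (i - 1) (r + 1) (d2 (i - 1) r (d2 (i - 1) (r - 1) c))" using c dc by (simp add: d12')
  also have "\<dots> = mzero (A i (r + 1))" using c by (simp add: d22')
  finally have 1: "d2 i r x = mzero (A i (r + 1))" .
  have 2: "d1 i r x = mzero (A (i + 1) r)" using c dc by (simp add: d11')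
  show "x \<in> SR i r" using 1 2 c dc unfolding SR_def by simp
qed

lemma SDc: "SD i r \<subseteq> carr (A i r)" unfolding SD_def by auto

lemma subSD: "is_rmod (sub_rmod (A i r) (SD i r))" using submod_rmod[OF Am SD_sub] .
lemma subSR: "is_rmod (sub_rmod (A i r) (SR i r))" using submod_rmod[OF Am SR_sub] .
lemma NDsub: "submod (sub_rmod (A i r) (SD i r)) (ND i r)" using submod_sub[OF ND_sub ND_SD] .
lemma NRsub: "submod (sub_rmod (A i r) (SR i r)) (NR i r)" using submod_sub[OF NR_sub NR_SR] .

lemma don_mod: "is_rmod (donor A d1 d2 i r)" unfolding donor_eq using quot_rmod[OF subSD NDsub] .
lemma rec_mod: "is_rmod (receptor A d1 d2 i r)" unfolding receptor_eq using quot_rmod[OF subSR NRsub] .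

abbreviation dq where "dq i r \<equiv> qcls (A i r) (ND i r)"
abbreviation rq where "rq i r \<equiv> qcls (A i r) (NR i r)"

lemma don_carr: "carr (donor A d1 d2 i r) = dq i r ` SD i r"
  unfolding donor_eq using quot_carr[OF subSD NDsub] by simp
lemma rec_carr: "carr (receptor A d1 d2 i r) = rq i r ` SR i r"
  unfolding receptor_eq using quot_carr[OF subSR NRsub] by simp
lemma don_zero: "mzero (donor A d1 d2 i r) = dq i r (mzero (A i r))"
  unfolding donor_eq using quot_zero[OF subSD NDsub] by simp
lemma rec_zero: "mzero (receptor A d1 d2 i r) = rq i r (mzero (A i r))"
  unfolding receptor_eq using quot_zero[OF subSR NRsub] by simp
lemma don_add: "x \<in> SD i r \<Longrightarrow> y \<in> SD i r \<Longrightarrow> madd (donor A d1 d2 i r) (dq i r x) (dq i r y) = dq i r (madd (A i r) x y)"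
  unfolding donor_eq using quot_add[OF subSD NDsub] by simp
lemma rec_add: "x \<in> SR i r \<Longrightarrow> y \<in> SR i r \<Longrightarrow> madd (receptor A d1 d2 i r) (rq i r x) (rq i r y) = rq i r (madd (A i r) x y)"
  unfolding receptor_eq using quot_add[OF subSR NRsub] by simp
lemma don_smul: "x \<in> SD i r \<Longrightarrow> msmul (donor A d1 d2 i r) a (dq i r x) = dq i r (msmul (A i r) a x)"
  unfolding donor_eq using quot_smul[OF subSD NDsub] by simp
lemma rec_smul: "x \<in> SR i r \<Longrightarrow> msmul (receptor A d1 d2 i r) a (rq i r x) = rq i r (msmul (A i r) a x)"
  unfolding receptor_eq using quot_smul[OF subSR NRsub] by simp
lemma don_eq: "x \<in> SD i r \<Longrightarrow> y \<in> SD i r \<Longrightarrow> dq i r x = dq i r y \<longleftrightarrow> madd (A i r) x (mneg (A i r) y) \<in> ND i r"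
  using qcls_eq_iff[OF subSD NDsub] by simp
lemma rec_eq: "x \<in> SR i r \<Longrightarrow> y \<in> SR i r \<Longrightarrow> rq i r x = rq i r y \<longleftrightarrow> madd (A i r) x (mneg (A i r) y) \<in> NR i r"
  using qcls_eq_iff[OF subSR NRsub] by simp
lemma don_some: "x \<in> SD i r \<Longrightarrow> (SOME y. y \<in> dq i r x) \<in> SD i r \<and> madd (A i r) (SOME y. y \<in> dq i r x) (mneg (A i r) x) \<in> ND i r"
  using qcls_some(1)[OF subSD NDsub] qcls_some(2)[OF subSD NDsub] by simp
lemma rec_some: "x \<in> SR i r \<Longrightarrow> (SOME y. y \<in> rq i r x) \<in> SR i r \<and> madd (A i r) (SOME y. y \<in> rq i r x) (mneg (A i r) x) \<in> NR i r"
  using qcls_some(1)[OF subSR NRsub] qcls_some(2)[OF subSR NRsub] by simp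
lemma don_rep: "X \<in> carr (donor A d1 d2 i r) \<Longrightarrow> (SOME x. x \<in> X) \<in> SD i r \<and> dq i r (SOME x. x \<in> X) = X"
  unfolding donor_eq using quot_rep[OF subSD NDsub] by simp
lemma rec_rep: "X \<in> carr (receptor A d1 d2 i r) \<Longrightarrow> (SOME x. x \<in> X) \<in> SR i r \<and> rq i r (SOME x. x \<in> X) = X"
  unfolding receptor_eq using quot_rep[OF subSR NRsub] by simp
lemma don_in: "x \<in> SD i r \<Longrightarrow> dq i r x \<in> carr (donor A d1 d2 i r)" by (simp add: don_carr)
lemma rec_in: "x \<in> SR i r \<Longrightarrow> rq i r x \<in> carr (receptor A d1 d2 i r)" by (simp add: rec_carr)
lemma don_eqI: "x \<in> SD i r \<Longrightarrow> y \<in> SD i r \<Longrightarrow> madd (A i r) x (mneg (A i r) y) \<in> ND i r \<Longrightarrow> dq i r x = dq i r y"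
  using don_eq by blast
lemma rec_eqI: "x \<in> SR i r \<Longrightarrow> y \<in> SR i r \<Longrightarrow> madd (A i r) x (mneg (A i r) y) \<in> NR i r \<Longrightarrow> rq i r x = rq i r y"
  using rec_eq by blast


lemma SD_add: "x \<in> SD i r \<Longrightarrow> y \<in> SD i r \<Longrightarrow> madd (A i r) x y \<in> SD i r" using submodD(3)[OF SD_sub] .
lemma SD_smul: "x \<in> SD i r \<Longrightarrow> msmul (A i r) a x \<in> SD i r" using submodD(4)[OF SD_sub] .
lemma SD_neg: "x \<in> SD i r \<Longrightarrow> mneg (A i r) x \<in> SD i r" using submod_neg[OF SD_sub] .
lemma SD_zero: "mzero (A i r) \<in> SD i r" using submodD(2)[OF SD_sub] .
lemma SR_add: "x \<in> SR i r \<Longrightarrow> y \<in> SR i r \<Longrightarrow> madd (A i r) x y \<in> SR i r" using submodD(3)[OF SR_sub] .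
lemma SR_smul: "x \<in> SR i r \<Longrightarrow> msmul (A i r) a x \<in> SR i r" using submodD(4)[OF SR_sub] .
lemma SR_zero: "mzero (A i r) \<in> SR i r" using submodD(2)[OF SR_sub] .

lemma SR_c: "x \<in> SR i r \<Longrightarrow> x \<in> carr (A i r)" unfolding SR_def by simp
lemma SR_d1: "x \<in> SR i r \<Longrightarrow> d1 i r x = mzero (A (i + 1) r)" unfolding SR_def by simp
lemma SR_d2: "x \<in> SR i r \<Longrightarrow> d2 i r x = mzero (A i (r + 1))" unfolding SR_def by simp
lemma SR_I: "x \<in> carr (A i r) \<Longrightarrow> d2 i r x = mzero (A i (r + 1)) \<Longrightarrow> d1 i r x = mzero (A (i + 1) r) \<Longrightarrow> x \<in> SR i r"
  unfolding SR_def by simp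

lemma d1_ND: "a \<in> carr (A (i - 1) r) \<Longrightarrow> d1 (i - 1) r a \<in> ND i r"
  unfolding ND_mem by (rule bexI[of _ a], rule bexI[of _ "mzero (A i (r - 1))"]) simp_all


lemma d1_SR: "x \<in> SD i r \<Longrightarrow> d1 i r x \<in> SR (i + 1) r"
  unfolding SR_def SD_def by (auto simp: d12[symmetric] d11)

lemma d2_SR: "x \<in> SD i r \<Longrightarrow> d2 i r x \<in> SR i (r + 1)"
  unfolding SR_def SD_def by (auto simp: d22)

lemma d1_ND_NR: "x \<in> ND i r \<Longrightarrow> d1 i r x \<in> NR (i + 1) r"
  unfolding ND_mem NR_mem by (auto simp: d1_add d11')

lemma d2_ND_NR: "x \<in> ND i r \<Longrightarrow> d2 i r x \<in> NR i (r + 1)"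
  unfolding ND_mem NR_mem by (auto simp: d2_add d22' d12')

lemma induced_on_rep:
  assumes f: "rmod_hom (A i r) (A j s) f" and fS: "\<And>x. x \<in> SD i r \<Longrightarrow> f x \<in> SR j s"
    and fN: "\<And>x. x \<in> ND i r \<Longrightarrow> f x \<in> NR j s" and x: "x \<in> SD i r"
  shows "rq j s (f (SOME y. y \<in> dq i r x)) = rq j s (f x)"
proof (rule rec_eqI[OF fS fS[OF x]])
  let ?y = "SOME y. y \<in> dq i r x"
  show y: "?y \<in> SD i r" using don_some[OF x] by blast
  have "madd (A i r) ?y (mneg (A i r) x) \<in> ND i r" using don_some[OF x] by blast
  then show "madd (A j s) (f ?y) (mneg (A j s) (f x)) \<in> NR j s"
    using fN hom_diff[OF Am f] subsetD[OF SDc x] subsetD[OF SDc y] by metis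
qed

lemma induced_hom:
  assumes f: "rmod_hom (A i r) (A j s) f" and fS: "\<And>x. x \<in> SD i r \<Longrightarrow> f x \<in> SR j s"
    and g: "\<And>x. x \<in> SD i r \<Longrightarrow> g (dq i r x) = rq j s (f x)"
  shows "rmod_hom (donor A d1 d2 i r) (receptor A d1 d2 j s) g"
  unfolding rmod_hom_def
proof (intro conjI ballI allI)
  show "g ` carr (donor A d1 d2 i r) \<subseteq> carr (receptor A d1 d2 j s)"
    using g fS rec_in by (auto simp: don_carr)
next
  fix X Y assume "X \<in> carr (donor A d1 d2 i r)" "Y \<in> carr (donor A d1 d2 i r)"
  then obtain x y where xy: "x \<in> SD i r" "y \<in> SD i r" "X = dq i r x" "Y = dq i r y" by (auto simp: don_carr)
  then show "g (madd (donor A d1 d2 i r) X Y) = madd (receptor A d1 d2 j s) (g X) (g Y)"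
    using SDc homD(2)[OF f] by (simp add: subset_iff don_add g SD_add rec_add fS)
next
  fix a X assume "X \<in> carr (donor A d1 d2 i r)"
  then obtain x where "x \<in> SD i r" "X = dq i r x" by (auto simp: don_carr)
  then show "g (msmul (donor A d1 d2 i r) a X) = msmul (receptor A d1 d2 j s) a (g X)"
    using SDc homD(3)[OF f] by (simp add: subset_iff don_smul g SD_smul rec_smul fS)
qed

lemma ext_v_q: "x \<in> SD i r \<Longrightarrow> ext_v A d1 d2 i r (dq i r x) = rq (i + 1) r (d1 i r x)"
  unfolding ext_v_def using induced_on_rep[OF h1 d1_SR d1_ND_NR] .

lemma ext_h_q: "x \<in> SD i r \<Longrightarrow> ext_h A d1 d2 i r (dq i r x) = rq i (r + 1) (d2 i r x)"
  unfolding ext_h_def using induced_on_rep[OF h2 d2_SR d2_ND_NR] .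

lemma ext_v_hom: "rmod_hom (donor A d1 d2 i r) (receptor A d1 d2 (i + 1) r) (ext_v A d1 d2 i r)"
  using induced_hom[OF h1 d1_SR ext_v_q] .

lemma ext_h_hom: "rmod_hom (donor A d1 d2 i r) (receptor A d1 d2 i (r + 1)) (ext_h A d1 d2 i r)"
  using induced_hom[OF h2 d2_SR ext_h_q] .

lemma dq_sub_d1:
  assumes a: "a \<in> carr (A (i - 1) r)" and x: "x \<in> SD i r"
  shows "dq i r (madd (A i r) x (mneg (A i r) (d1 (i - 1) r a))) = dq i r x"
proof (rule don_eqI)
  have dn: "d1 (i - 1) r a \<in> ND i r" using d1_ND[OF a] .
  then show "madd (A i r) x (mneg (A i r) (d1 (i - 1) r a)) \<in> SD i r" using SD_add[OF x SD_neg] ND_SD by auto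
  show "madd (A i r) (madd (A i r) x (mneg (A i r) (d1 (i - 1) r a))) (mneg (A i r) x) \<in> ND i r"
    using rm_diff_self[OF Am _ d1_in'[OF a]] subsetD[OF SDc x] submod_neg[OF ND_sub dn] by simp
qed (rule x)

lemma ext_v_in: "X \<in> carr (donor A d1 d2 i r) \<Longrightarrow> ext_v A d1 d2 i r X \<in> carr (receptor A d1 d2 (i + 1) r)"
  using homD(1)[OF ext_v_hom] .

lemma ext_h_in: "X \<in> carr (donor A d1 d2 i r) \<Longrightarrow> ext_h A d1 d2 i r X \<in> carr (receptor A d1 d2 i (r + 1))"
  using homD(1)[OF ext_h_hom] .

text \<open>Injectivity of the vertical extramural map: if d1 x lies in im p, then subtracting a
  horizontal boundary from x yields a vertical cycle, hence (exactness) a vertical boundary.\<close>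
lemma ext_v_inj: "inj_on (ext_v A d1 d2 i r) (carr (donor A d1 d2 i r))"
proof (rule inj_onI)
  fix X Y assume "X \<in> carr (donor A d1 d2 i r)" "Y \<in> carr (donor A d1 d2 i r)"
    and e: "ext_v A d1 d2 i r X = ext_v A d1 d2 i r Y"
  then obtain x y where xy: "x \<in> SD i r" "y \<in> SD i r" "X = dq i r x" "Y = dq i r y" by (auto simp: don_carr)
  have c: "x \<in> carr (A i r)" "y \<in> carr (A i r)" using xy SDc by auto
  let ?d = "madd (A i r) x (mneg (A i r) y)"
  have dc: "?d \<in> carr (A i r)" using c by simp
  have "rq (i + 1) r (d1 i r x) = rq (i + 1) r (d1 i r y)" using e xy by (simp add: ext_v_q)
  then have "d1 i r ?d \<in> NR (i + 1) r"
    using rec_eq[OF d1_SR[OF xy(1)] d1_SR[OF xy(2)]] c by (simp add: d1_add d1_neg)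
  then obtain cc where cc: "cc \<in> carr (A i (r - 1))" "d1 i r ?d = d1 i r (d2 i (r - 1) cc)"
    unfolding NR_mem by auto
  let ?e = "madd (A i r) ?d (mneg (A i r) (d2 i (r - 1) cc))"
  have ec: "?e \<in> carr (A i r)" using dc cc by simp
  have "d1 i r ?e = mzero (A (i + 1) r)" using dc cc by (simp add: d1_add d1_neg)
  then obtain aa where aa: "aa \<in> carr (A (i - 1) r)" "?e = d1 (i - 1) r aa" using exact[OF ec] by blast
  have "?d = madd (A i r) ?e (d2 i (r - 1) cc)" using dc cc by (simp add: rm_diff_add)
  then have "?d \<in> ND i r" unfolding ND_mem using aa cc by auto
  then show "X = Y" using xy don_eqI by auto
qed

text \<open>Surjectivity: a receptor representative z in row i+1 is a vertical cycle, hence z = d1 x,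
  and x lies in the donor numerator because d2 z = 0.\<close>
lemma ext_v_surj: "ext_v A d1 d2 i r ` carr (donor A d1 d2 i r) = carr (receptor A d1 d2 (i + 1) r)"
proof
  show "ext_v A d1 d2 i r ` carr (donor A d1 d2 i r) \<subseteq> carr (receptor A d1 d2 (i + 1) r)"
    using ext_v_in by auto
next
  show "carr (receptor A d1 d2 (i + 1) r) \<subseteq> ext_v A d1 d2 i r ` carr (donor A d1 d2 i r)"
  proof
    fix Y assume "Y \<in> carr (receptor A d1 d2 (i + 1) r)"
    then obtain z where z: "z \<in> SR (i + 1) r" "Y = rq (i + 1) r z" by (auto simp: rec_carr)
    obtain x where x: "x \<in> carr (A i r)" "z = d1 i r x"
      using exact'[OF SR_c[OF z(1)]] SR_d1[OF z(1)] by (auto simp: add.assoc)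
    have xs: "x \<in> SD i r" unfolding SD_def using x SR_d2[OF z(1)] by (simp add: d12)
    have "Y = ext_v A d1 d2 i r (dq i r x)" using z x xs by (simp add: ext_v_q)
    then show "Y \<in> ext_v A d1 d2 i r ` carr (donor A d1 d2 i r)" using don_in[OF xs] by blast
  qed
qed

lemma ext_v_iso: "rmod_iso (donor A d1 d2 i r) (receptor A d1 d2 (i + 1) r) (ext_v A d1 d2 i r)"
  unfolding rmod_iso_def bij_betw_def using ext_v_hom ext_v_inj ext_v_surj by blast

lemma inv_ext_v: "X \<in> carr (donor A d1 d2 i r) \<Longrightarrow> the_inv_into (carr (donor A d1 d2 i r)) (ext_v A d1 d2 i r) (ext_v A d1 d2 i r X) = X"
  by (rule the_inv_into_f_f[OF ext_v_inj])
lemma ext_v_inv: "Y \<in> carr (receptor A d1 d2 (i + 1) r) \<Longrightarrow> ext_v A d1 d2 i r (the_inv_into (carr (donor A d1 d2 i r)) (ext_v A d1 d2 i r) Y) = Y"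
  by (rule f_the_inv_into_f[OF ext_v_inj]) (simp add: ext_v_surj)
lemma inv_ext_v_in: "Y \<in> carr (receptor A d1 d2 (i + 1) r) \<Longrightarrow> the_inv_into (carr (donor A d1 d2 i r)) (ext_v A d1 d2 i r) Y \<in> carr (donor A d1 d2 i r)"
  by (rule the_inv_into_into[OF ext_v_inj]) (simp_all add: ext_v_surj)

end

section \<open>The product total complex\<close>

definition sg :: "int \<Rightarrow> 'r::ring_1" where "sg k = (if even k then 1 else -1)"
lemma pow_sg: "((-1::'r::ring_1) ^ nat \<bar>k\<bar>) = sg k"
proof -
  have "even (nat \<bar>k\<bar>) \<longleftrightarrow> even k" by (simp add: even_nat_iff)
  then show ?thesis by (auto simp: sg_def)
qed
lemma sg_pred: "sg (k - 1) = - (sg k :: 'r::ring_1)" by (simp add: sg_def)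
lemma sg_sq: "sg k * sg k = (1 :: 'r::ring_1)" by (simp add: sg_def)
lemma sg_comm: "a * sg k = sg k * (a :: 'r::ring_1)" by (simp add: sg_def)

lemma rm_sg_comm: "is_rmod M \<Longrightarrow> x \<in> carr M \<Longrightarrow> msmul M a (msmul M (sg k) x) = msmul M (sg k) (msmul M a x)"
  by (simp add: rm_smul_smul sg_comm)

context col_exact_dc begin

lemma A_idx: "r = s \<Longrightarrow> A i r = A i s" by simp

lemma tot_in: "x \<in> carr (tot A m) \<longleftrightarrow> (\<forall>i. x i \<in> carr (A i (m - i)))" by (simp add: tot_def)
lemma tot_ing: "x \<in> carr (tot A m) \<Longrightarrow> r = m - i \<Longrightarrow> x i \<in> carr (A i r)" by (simp add: tot_def)
lemma tot_mod: "is_rmod (tot A m)" unfolding tot_def by (rule prod_rmod) simp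
lemma tot_add: "madd (tot A m) x y = (\<lambda>i. madd (A i (m - i)) (x i) (y i))" by (simp add: tot_def)
lemma tot_smul: "msmul (tot A m) a x = (\<lambda>i. msmul (A i (m - i)) a (x i))" by (simp add: tot_def)
lemma tot_zero: "mzero (tot A m) = (\<lambda>i. mzero (A i (m - i)))" by (simp add: tot_def)
lemma tot_neg: "mneg (tot A m) x = (\<lambda>i. mneg (A i (m - i)) (x i))" by (simp add: tot_def prod_mneg)

lemma totd_comp: "b = m - i \<Longrightarrow> c = m - i + 1 \<Longrightarrow>
  totd A d1 d2 m x i = madd (A i c) (d2 i b (x i)) (msmul (A i c) (sg m) (d1 (i - 1) c (x (i - 1))))"
proof -
  assume b: "b = m - i" and c: "c = m - i + 1"
  have e: "m + 1 - i = m - i + 1" by simp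
  show ?thesis unfolding totd_def pow_sg e using b c by simp
qed

lemma totd_comp_in: assumes x: "x \<in> carr (tot A m)"
  shows "totd A d1 d2 m x i \<in> carr (A i (m - i + 1))"
proof -
  have xi: "x i \<in> carr (A i (m - i))" using tot_ing[OF x] by simp
  have xp: "x (i - 1) \<in> carr (A (i - 1) (m - i + 1))" using tot_ing[OF x, of "m - i + 1" "i - 1"] by simp
  show ?thesis using totd_comp[of "m - i" m i "m - i + 1" x] xi xp by simp
qed

lemma totd_in: assumes x: "x \<in> carr (tot A m)" shows "totd A d1 d2 m x \<in> carr (tot A (m + 1))"
proof -
  have e: "\<And>i. m + 1 - i = m - i + 1" by simp
  show ?thesis unfolding tot_in e using totd_comp_in[OF x] by simp
qed

lemma totd_add:
  assumes x: "x \<in> carr (tot A m)" and y: "y \<in> carr (tot A m)"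
  shows "totd A d1 d2 m (madd (tot A m) x y) = madd (tot A (m + 1)) (totd A d1 d2 m x) (totd A d1 d2 m y)"
proof
  fix i
  let ?M = "A i (m - i + 1)"
  have xi: "x i \<in> carr (A i (m - i))" and yi: "y i \<in> carr (A i (m - i))" using tot_ing[OF x] tot_ing[OF y] by simp_all
  have xp: "x (i - 1) \<in> carr (A (i - 1) (m - i + 1))" and yp: "y (i - 1) \<in> carr (A (i - 1) (m - i + 1))"
    using tot_ing[OF x, of "m - i + 1" "i - 1"] tot_ing[OF y, of "m - i + 1" "i - 1"] by simp_all
  have ep: "m - (i - 1) = m - i + 1" and e: "m + 1 - i = m - i + 1" by simp_all
  have "totd A d1 d2 m (madd (tot A m) x y) i = madd ?M (madd ?M (d2 i (m - i) (x i)) (d2 i (m - i) (y i)))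
      (madd ?M (msmul ?M (sg m) (d1 (i - 1) (m - i + 1) (x (i - 1)))) (msmul ?M (sg m) (d1 (i - 1) (m - i + 1) (y (i - 1)))))"
    using xi xp yi yp by (simp add: totd_comp[of "m - i" m i "m - i + 1"] tot_add ep d2_addg d1_add rm_smul_add)
  also have "\<dots> = madd (tot A (m + 1)) (totd A d1 d2 m x) (totd A d1 d2 m y) i"
    using xi xp yi yp by (simp add: rm_add4 totd_comp[of "m - i" m i "m - i + 1"] tot_add e)
  finally show "totd A d1 d2 m (madd (tot A m) x y) i = madd (tot A (m + 1)) (totd A d1 d2 m x) (totd A d1 d2 m y) i" .
qed

lemma totd_smul:
  assumes x: "x \<in> carr (tot A m)"
  shows "totd A d1 d2 m (msmul (tot A m) a x) = msmul (tot A (m + 1)) a (totd A d1 d2 m x)"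
proof
  fix i
  let ?M = "A i (m - i + 1)"
  have xi: "x i \<in> carr (A i (m - i))" using tot_ing[OF x] by simp
  have xp: "x (i - 1) \<in> carr (A (i - 1) (m - i + 1))" using tot_ing[OF x, of "m - i + 1" "i - 1"] by simp
  have ep: "m - (i - 1) = m - i + 1" and e: "m + 1 - i = m - i + 1" by simp_all
  have "totd A d1 d2 m (msmul (tot A m) a x) i = madd ?M (msmul ?M a (d2 i (m - i) (x i)))
      (msmul ?M a (msmul ?M (sg m) (d1 (i - 1) (m - i + 1) (x (i - 1)))))"
    using xi xp by (simp add: totd_comp[of "m - i" m i "m - i + 1"] tot_smul ep d2_smulg d1_smul rm_sg_comm)
  also have "\<dots> = msmul (tot A (m + 1)) a (totd A d1 d2 m x) i"
    using xi xp by (simp add: rm_smul_add totd_comp[of "m - i" m i "m - i + 1"] tot_smul e)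
  finally show "totd A d1 d2 m (msmul (tot A m) a x) i = msmul (tot A (m + 1)) a (totd A d1 d2 m x) i" .
qed

lemma totd_hom: "rmod_hom (tot A m) (tot A (m + 1)) (totd A d1 d2 m)"
  unfolding rmod_hom_def using totd_in totd_add totd_smul by auto

lemma bnd_comp: assumes w: "w \<in> carr (tot A (m - 1))"
  shows "totd A d1 d2 (m - 1) w i = madd (A i (m - i)) (d2 i (m - i - 1) (w i)) (msmul (A i (m - i)) (- sg m) (d1 (i - 1) (m - i) (w (i - 1))))"
  by (simp add: totd_comp[of "m - i - 1" "m - 1" i "m - i" w] sg_pred)

text \<open>The two terms of totd (totd w) at row i: applying d2 at row i, and d1 from row i - 1,
  to totd w both leave (up to the sign - sg m) the mixed term d1 d2 w_(i-1).\<close>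
lemma d2_totd_prev:
  assumes w: "w \<in> carr (tot A (m - 1))"
  shows "d2 i (m - i) (totd A d1 d2 (m - 1) w i)
     = msmul (A i (m - i + 1)) (- sg m) (d1 (i - 1) (m - i + 1) (d2 (i - 1) (m - i) (w (i - 1))))"
proof -
  let ?M = "A i (m - i + 1)"
  have wi: "w i \<in> carr (A i (m - i - 1))" using tot_ing[OF w, of "m - i - 1" i] by simp
  have wp: "w (i - 1) \<in> carr (A (i - 1) (m - i))" using tot_ing[OF w, of "m - i" "i - 1"] by simp
  have "d2 i (m - i) (totd A d1 d2 (m - 1) w i) = madd ?M (d2 i (m - i) (d2 i (m - i - 1) (w i)))
      (msmul ?M (- sg m) (d2 i (m - i) (d1 (i - 1) (m - i) (w (i - 1)))))"
    using bnd_comp[OF w] wp d2_in_idx[OF wi] by (simp add: d2_addg d2_smulg)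
  also have "d2 i (m - i) (d2 i (m - i - 1) (w i)) = mzero ?M" using d22g[OF wi, of "m - i" "m - i + 1"] by simp
  also have "d2 i (m - i) (d1 (i - 1) (m - i) (w (i - 1))) = d1 (i - 1) (m - i + 1) (d2 (i - 1) (m - i) (w (i - 1)))"
    using d12g[OF wp, of i "m - i + 1"] by simp
  finally show ?thesis using wp by (simp add: d1_in_idx)
qed

lemma d1_totd_prev:
  assumes w: "w \<in> carr (tot A (m - 1))"
  shows "d1 (i - 1) (m - i + 1) (totd A d1 d2 (m - 1) w (i - 1)) = d1 (i - 1) (m - i + 1) (d2 (i - 1) (m - i) (w (i - 1)))"
proof -
  let ?M = "A i (m - i + 1)"
  have wp: "w (i - 1) \<in> carr (A (i - 1) (m - i))" using tot_ing[OF w, of "m - i" "i - 1"] by simp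
  have wpp: "w (i - 2) \<in> carr (A (i - 2) (m - i + 1))" using tot_ing[OF w, of "m - i + 1" "i - 2"] by simp
  have "i - 1 - 1 = i - 2" by simp
  then have "totd A d1 d2 (m - 1) w (i - 1) = madd (A (i - 1) (m - i + 1)) (d2 (i - 1) (m - i) (w (i - 1)))
      (msmul (A (i - 1) (m - i + 1)) (- sg m) (d1 (i - 2) (m - i + 1) (w (i - 2))))"
    by (simp add: totd_comp[of "m - i" "m - 1" "i - 1" "m - i + 1" w] sg_pred)
  moreover have "d1 (i - 1) (m - i + 1) (d1 (i - 2) (m - i + 1) (w (i - 2))) = mzero ?M"
    using d11g[OF wpp, of "i - 1" i] by simp
  ultimately show ?thesis using wp d1_in_idx[OF wpp, of "i - 1"] by (simp add: d1_addg d1_smulg)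
qed

lemma totd_totd:
  assumes w: "w \<in> carr (tot A (m - 1))"
  shows "totd A d1 d2 m (totd A d1 d2 (m - 1) w) = mzero (tot A (m + 1))"
proof
  fix i
  let ?M = "A i (m - i + 1)"
  let ?Y = "d1 (i - 1) (m - i + 1) (d2 (i - 1) (m - i) (w (i - 1)))"
  have "?Y \<in> carr ?M" using tot_ing[OF w, of "m - i" "i - 1"] by (simp add: d1_in_idx)
  then have "totd A d1 d2 m (totd A d1 d2 (m - 1) w) i = madd ?M (msmul ?M (- sg m) ?Y) (msmul ?M (sg m) ?Y)"
    by (simp add: totd_comp[of "m - i" m i "m - i + 1"] d2_totd_prev[OF w] d1_totd_prev[OF w])
  also have "\<dots> = mzero ?M" using \<open>?Y \<in> carr ?M\<close> by (simp add: rm_smul_sum_zero)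
  finally show "totd A d1 d2 m (totd A d1 d2 (m - 1) w) i = mzero (tot A (m + 1)) i"
    by (simp add: tot_zero add.commute add_diff_eq)
qed

lemma cyc_sub: "submod (tot A m) (cycles A d1 d2 m)"
  unfolding cycles_def using submod_kernel[OF tot_mod tot_mod totd_hom] .

lemma bnd_sub: "submod (tot A m) (boundaries A d1 d2 m)"
  unfolding boundaries_def using submod_image[OF tot_mod tot_mod totd_hom[of "m - 1"] submod_carr[OF tot_mod]] by simp

lemma bnd_cyc: "boundaries A d1 d2 m \<subseteq> cycles A d1 d2 m"
proof
  fix x assume "x \<in> boundaries A d1 d2 m"
  then obtain w where w: "w \<in> carr (tot A (m - 1))" "x = totd A d1 d2 (m - 1) w" unfolding boundaries_def by auto
  have "x \<in> carr (tot A m)" using totd_in[OF w(1)] w(2) by simp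
  then show "x \<in> cycles A d1 d2 m" unfolding cycles_def using totd_totd[OF w(1)] w(2) by simp
qed

lemma cycc: "cycles A d1 d2 m \<subseteq> carr (tot A m)" unfolding cycles_def by auto

lemma subC: "is_rmod (sub_rmod (tot A m) (cycles A d1 d2 m))" using submod_rmod[OF tot_mod cyc_sub] .
lemma Bsub: "submod (sub_rmod (tot A m) (cycles A d1 d2 m)) (boundaries A d1 d2 m)"
  using submod_sub[OF bnd_sub bnd_cyc] .

abbreviation hq where "hq m \<equiv> qcls (tot A m) (boundaries A d1 d2 m)"

lemma Htot_eq: "Htot A d1 d2 m = quot_rmod (sub_rmod (tot A m) (cycles A d1 d2 m)) (boundaries A d1 d2 m)"
  by (simp add: Htot_def)

lemma H_mod: "is_rmod (Htot A d1 d2 m)" unfolding Htot_eq using quot_rmod[OF subC Bsub] .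
lemma H_carr: "carr (Htot A d1 d2 m) = hq m ` cycles A d1 d2 m"
  unfolding Htot_eq using quot_carr[OF subC Bsub] by simp
lemma H_zero: "mzero (Htot A d1 d2 m) = hq m (mzero (tot A m))"
  unfolding Htot_eq using quot_zero[OF subC Bsub] by simp
lemma H_add: "x \<in> cycles A d1 d2 m \<Longrightarrow> y \<in> cycles A d1 d2 m \<Longrightarrow> madd (Htot A d1 d2 m) (hq m x) (hq m y) = hq m (madd (tot A m) x y)"
  unfolding Htot_eq using quot_add[OF subC Bsub] by simp
lemma H_smul: "x \<in> cycles A d1 d2 m \<Longrightarrow> msmul (Htot A d1 d2 m) a (hq m x) = hq m (msmul (tot A m) a x)"
  unfolding Htot_eq using quot_smul[OF subC Bsub] by simp
lemma H_eq: "x \<in> cycles A d1 d2 m \<Longrightarrow> y \<in> cycles A d1 d2 m \<Longrightarrow> hq m x = hq m y \<longleftrightarrow> madd (tot A m) x (mneg (tot A m) y) \<in> boundaries A d1 d2 m"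
  using qcls_eq_iff[OF subC Bsub] by simp
lemma H_eqI: "x \<in> cycles A d1 d2 m \<Longrightarrow> y \<in> cycles A d1 d2 m \<Longrightarrow> madd (tot A m) x (mneg (tot A m) y) \<in> boundaries A d1 d2 m \<Longrightarrow> hq m x = hq m y"
  using H_eq by blast
lemma H_in: "x \<in> cycles A d1 d2 m \<Longrightarrow> hq m x \<in> carr (Htot A d1 d2 m)" by (simp add: H_carr)
lemma H_mem: assumes X: "X \<in> carr (Htot A d1 d2 m)" and x: "x \<in> X"
  shows "x \<in> cycles A d1 d2 m" "X = hq m x"
proof -
  obtain y where y: "y \<in> cycles A d1 d2 m" "X = hq m y" using X by (auto simp: H_carr)
  show "x \<in> cycles A d1 d2 m" using qcls_mem(1)[OF subC Bsub, where x=y and y=x] y x by simp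
  show "X = hq m x" using qcls_mem(2)[OF subC Bsub, where x=y and y=x] y x by simp
qed
lemma H_self: "x \<in> cycles A d1 d2 m \<Longrightarrow> x \<in> hq m x"
  using qcls_self[OF subC Bsub] by simp
lemma H_ne: "X \<in> carr (Htot A d1 d2 m) \<Longrightarrow> (SOME x. x \<in> X) \<in> X"
proof -
  assume "X \<in> carr (Htot A d1 d2 m)"
  then obtain x where "x \<in> cycles A d1 d2 m" "X = hq m x" by (auto simp: H_carr)
  then have "x \<in> X" using H_self by simp
  then show ?thesis by (rule someI[where P="\<lambda>x. x \<in> X"])
qed

lemma hq_add_bnd: assumes z: "z \<in> hq m y" and yc: "y \<in> carr (tot A m)" and b: "b \<in> boundaries A d1 d2 m"
  shows "madd (tot A m) z b \<in> hq m y"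
proof -
  obtain u where u: "u \<in> boundaries A d1 d2 m" "z = madd (tot A m) y u" using z unfolding qcls_def by auto
  have uc: "u \<in> carr (tot A m)" and bc: "b \<in> carr (tot A m)" using u b submodD(1)[OF bnd_sub] by auto
  have "madd (tot A m) z b = madd (tot A m) y (madd (tot A m) u b)" using u(2) yc uc bc by (simp add: rm_assoc[OF tot_mod])
  moreover have "madd (tot A m) u b \<in> boundaries A d1 d2 m" using submodD(3)[OF bnd_sub u(1) b] .
  ultimately show ?thesis unfolding qcls_def by auto
qed

lemma cyc_comp: assumes x: "x \<in> cycles A d1 d2 m"
  shows "madd (A i (m - i + 1)) (d2 i (m - i) (x i)) (msmul (A i (m - i + 1)) (sg m) (d1 (i - 1) (m - i + 1) (x (i - 1)))) = mzero (A i (m - i + 1))"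
proof -
  have "totd A d1 d2 m x = mzero (tot A (m + 1))" using x unfolding cycles_def by simp
  then have "totd A d1 d2 m x i = mzero (A i (m + 1 - i))" by (simp add: tot_zero)
  moreover have e: "m + 1 - i = m - i + 1" by simp
  ultimately show ?thesis using totd_comp[of "m - i" m i "m - i + 1" x] by (simp add: A_idx[OF e])
qed

lemma cyc_d2: assumes x: "x \<in> cycles A d1 d2 m"
  shows "d2 i (m - i) (x i) = msmul (A i (m - i + 1)) (- sg m) (d1 (i - 1) (m - i + 1) (x (i - 1)))"
proof -
  have xc: "x \<in> carr (tot A m)" using x cycc by auto
  have xi: "x i \<in> carr (A i (m - i))" using tot_ing[OF xc] by simp
  have xp: "x (i - 1) \<in> carr (A (i - 1) (m - i + 1))" using tot_ing[OF xc, of "m - i + 1" "i - 1"] by simp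
  let ?M = "A i (m - i + 1)"
  have a: "d2 i (m - i) (x i) \<in> carr ?M" using xi by simp
  have b: "msmul ?M (sg m) (d1 (i - 1) (m - i + 1) (x (i - 1))) \<in> carr ?M" using xp by simp
  have "madd ?M (msmul ?M (sg m) (d1 (i - 1) (m - i + 1) (x (i - 1)))) (d2 i (m - i) (x i)) = mzero ?M"
    using cyc_comp[OF x, of i] rm_comm[OF Am a b] by simp
  then have "d2 i (m - i) (x i) = mneg ?M (msmul ?M (sg m) (d1 (i - 1) (m - i + 1) (x (i - 1))))"
    using rm_neg_unique[OF Am b a] by simp
  then show ?thesis using xp by (simp add: rm_neg_smul)
qed

lemma cyc_SD: assumes x: "x \<in> cycles A d1 d2 m" shows "x i \<in> SD i (m - i)"
proof -
  have xc: "x \<in> carr (tot A m)" using x cycc by auto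
  have xi: "x i \<in> carr (A i (m - i))" using tot_ing[OF xc] by simp
  have xp: "x (i - 1) \<in> carr (A (i - 1) (m - i + 1))" using tot_ing[OF xc, of "m - i + 1" "i - 1"] by simp
  have "d1 i (m - i + 1) (d2 i (m - i) (x i)) = msmul (A (i + 1) (m - i + 1)) (- sg m) (d1 i (m - i + 1) (d1 (i - 1) (m - i + 1) (x (i - 1))))"
    using cyc_d2[OF x, of i] xp by (simp add: d1_smul)
  also have "\<dots> = mzero (A (i + 1) (m - i + 1))" using xp by (simp add: d11')
  finally show ?thesis unfolding SD_def using xi by simp
qed

lemma bnd_ND: assumes b: "b \<in> boundaries A d1 d2 m" shows "b i \<in> ND i (m - i)"
proof -
  obtain w where w: "w \<in> carr (tot A (m - 1))" "b = totd A d1 d2 (m - 1) w" using b unfolding boundaries_def by auto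
  have wi: "w i \<in> carr (A i (m - i - 1))" using tot_ing[OF w(1), of "m - i - 1" i] by simp
  have wp: "w (i - 1) \<in> carr (A (i - 1) (m - i))" using tot_ing[OF w(1), of "m - i" "i - 1"] by simp
  let ?a = "msmul (A (i - 1) (m - i)) (- sg m) (w (i - 1))"
  have ac: "?a \<in> carr (A (i - 1) (m - i))" using wp by simp
  have "b i = madd (A i (m - i)) (d2 i (m - i - 1) (w i)) (d1 (i - 1) (m - i) ?a)"
    using w(2) bnd_comp[OF w(1)] wp by (simp add: d1_smul)
  also have "\<dots> = madd (A i (m - i)) (d1 (i - 1) (m - i) ?a) (d2 i (m - i - 1) (w i))"
    using wi ac by (simp add: rm_comm[OF Am])
  finally show ?thesis unfolding ND_mem using ac wi by auto
qed

end

section \<open>The products of donors and receptors and the map dbar\<close>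

context col_exact_dc begin

lemma donprod_carr: "carr (donprod A d1 d2 m) = {X. \<forall>i. X i \<in> carr (donor A d1 d2 i (m - i))}"
  by (simp add: donprod_def)
lemma donprod_add: "madd (donprod A d1 d2 m) X Y = (\<lambda>i. madd (donor A d1 d2 i (m - i)) (X i) (Y i))"
  by (simp add: donprod_def)
lemma donprod_smul: "msmul (donprod A d1 d2 m) a X = (\<lambda>i. msmul (donor A d1 d2 i (m - i)) a (X i))"
  by (simp add: donprod_def)
lemma recprod_carr: "carr (recprod A d1 d2 m) = {Y. \<forall>i. Y i \<in> carr (receptor A d1 d2 i (m - i))}"
  by (simp add: recprod_def)
lemma recprod_zero: "mzero (recprod A d1 d2 m) = (\<lambda>i. mzero (receptor A d1 d2 i (m - i)))"
  by (simp add: recprod_def)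
lemma recprod_add: "madd (recprod A d1 d2 m) X Y = (\<lambda>i. madd (receptor A d1 d2 i (m - i)) (X i) (Y i))"
  by (simp add: recprod_def)
lemma recprod_smul: "msmul (recprod A d1 d2 m) a X = (\<lambda>i. msmul (receptor A d1 d2 i (m - i)) a (X i))"
  by (simp add: recprod_def)
lemma recprod_mod: "is_rmod (recprod A d1 d2 m)"
  unfolding recprod_def by (rule prod_rmod) (rule rec_mod)

lemma dbar_comp:
  "dbar A d1 d2 m X i = madd (receptor A d1 d2 i (m - i + 1)) (ext_h A d1 d2 i (m - i) (X i))
     (msmul (receptor A d1 d2 i (m - i + 1)) (sg m) (ext_v A d1 d2 (i - 1) (m - i + 1) (X (i - 1))))"
proof -
  have e: "m + 1 - i = m - i + 1" by simp
  show ?thesis unfolding dbar_def dbar1_def dbar2_def pow_sg e ..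
qed

lemma dbar_zero_iff:
  "dbar A d1 d2 m X = mzero (recprod A d1 d2 (m + 1)) \<longleftrightarrow> (\<forall>i. dbar A d1 d2 m X i = mzero (receptor A d1 d2 i (m - i + 1)))"
proof -
  have e: "\<And>i. m + 1 - i = m - i + 1" by simp
  show ?thesis unfolding recprod_zero e fun_eq_iff ..
qed

lemma totd_SR:
  assumes w: "w \<in> carr (tot A m)" and ws: "\<And>i. w i \<in> SD i (m - i)"
  shows "totd A d1 d2 m w i \<in> SR i (m - i + 1)"
proof -
  have e: "m - (i - 1) = m - i + 1" by simp
  have wp: "w (i - 1) \<in> SD (i - 1) (m - i + 1)" using ws[of "i - 1"] unfolding e .
  have "d1 (i - 1) (m - i + 1) (w (i - 1)) \<in> SR i (m - i + 1)" using d1_SR[OF wp] by simp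
  then show ?thesis unfolding totd_comp[of "m - i" m i "m - i + 1" w, OF refl refl]
    using SR_add[OF d2_SR[OF ws[of i]] SR_smul] by simp
qed

lemma dbar_dq:
  assumes w: "w \<in> carr (tot A m)" and ws: "\<And>i. w i \<in> SD i (m - i)"
  shows "dbar A d1 d2 m (\<lambda>i. dq i (m - i) (w i)) i = rq i (m - i + 1) (totd A d1 d2 m w i)"
proof -
  have e: "m - (i - 1) = m - i + 1" by simp
  have wp: "w (i - 1) \<in> SD (i - 1) (m - i + 1)" using ws[of "i - 1"] unfolding e .
  have "dbar A d1 d2 m (\<lambda>i. dq i (m - i) (w i)) i = madd (receptor A d1 d2 i (m - i + 1))
      (rq i (m - i + 1) (d2 i (m - i) (w i))) (msmul (receptor A d1 d2 i (m - i + 1)) (sg m) (rq i (m - i + 1) (d1 (i - 1) (m - i + 1) (w (i - 1)))))"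
    unfolding dbar_comp e using ext_h_q[OF ws[of i]] ext_v_q[OF wp] by simp
  also have "\<dots> = rq i (m - i + 1) (totd A d1 d2 m w i)"
    using d2_SR[OF ws[of i]] d1_SR[OF wp]
    by (simp add: totd_comp[of "m - i" m i "m - i + 1" w] rec_smul rec_add SR_smul)
  finally show ?thesis .
qed

lemma totd_vertical:
  assumes c: "\<And>i. c i \<in> carr (A (i - 1) (m - i))"
  shows "(\<lambda>i. d1 (i - 1) (m - i) (c i)) \<in> carr (tot A m)"
    "totd A d1 d2 m (\<lambda>i. d1 (i - 1) (m - i) (c i)) i = d1 (i - 1) (m - i + 1) (d2 (i - 1) (m - i) (c i))"
proof -
  show "(\<lambda>i. d1 (i - 1) (m - i) (c i)) \<in> carr (tot A m)" unfolding tot_in using c by simp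
  have e: "m - (i - 1) = m - i + 1" by simp
  have cp: "c (i - 1) \<in> carr (A (i - 1 - 1) (m - i + 1))" using c[of "i - 1"] unfolding e .
  have "d1 (i - 1) (m - i + 1) (d1 (i - 2) (m - (i - 1)) (c (i - 1))) = mzero (A i (m - i + 1))"
    unfolding e using d11'[OF cp] by simp
  then show "totd A d1 d2 m (\<lambda>i. d1 (i - 1) (m - i) (c i)) i = d1 (i - 1) (m - i + 1) (d2 (i - 1) (m - i) (c i))"
    using c[of i] by (simp add: totd_comp[of "m - i" m i "m - i + 1"] d12')
qed

lemma cycle_correction:
  assumes z: "z \<in> carr (tot A m)" and c: "\<And>i. c i \<in> carr (A (i - 1) (m - i))"
    and e: "\<And>i. totd A d1 d2 m z i = d1 (i - 1) (m - i + 1) (d2 (i - 1) (m - i) (c i))"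
  shows "madd (tot A m) z (mneg (tot A m) (\<lambda>i. d1 (i - 1) (m - i) (c i))) \<in> cycles A d1 d2 m"
proof -
  let ?b = "\<lambda>i. d1 (i - 1) (m - i) (c i)"
  have b: "?b \<in> carr (tot A m)" and eb: "totd A d1 d2 m z = totd A d1 d2 m ?b"
    using totd_vertical[OF c] e by auto
  have "totd A d1 d2 m (madd (tot A m) z (mneg (tot A m) ?b)) = mzero (tot A (m + 1))"
    using hom_diff[OF tot_mod totd_hom z b] eb totd_in[OF b] tot_mod by simp
  then show ?thesis unfolding cycles_def using z b tot_mod by simp
qed

end

section \<open>Total cohomology maps onto the kernel of dbar\<close>

locale col_exact_dc_deg = col_exact_dc A d1 d2 for A :: "int \<Rightarrow> int \<Rightarrow> ('r::ring_1, 'm) rmod" and d1 d2 +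
  fixes n :: int
begin

abbreviation s where "s \<equiv> (sg n :: 'r)"

lemma idx_next: "n - (i + 1) = n - i - 1" by simp
lemma idx_next_back: "n - i - 1 + 1 = n - i" by simp
lemma idx_prev_back: "n - (i - 1) - 1 = n - i" by simp
lemma idx_prev: "n - (i - 1) = n - i + 1" by simp
lemma idx_deg_pred: "n - 1 - j = n - j - 1" by simp

lemma cyc_c: "x \<in> cycles A d1 d2 m \<Longrightarrow> r = m - i \<Longrightarrow> x i \<in> carr (A i r)"
  using tot_ing cycc by blast

lemma dbar_ker_carr:
  "carr (dbar_ker A d1 d2 n) = {X \<in> carr (donprod A d1 d2 n). dbar A d1 d2 n X = mzero (recprod A d1 d2 (n + 1))}"
  unfolding dbar_ker_def mker_def by simp

definition hmap where "hmap X = (\<lambda>i. dq i (n - i) ((SOME x. x \<in> X) i))"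

lemma hmap_rep:
  assumes X: "X \<in> carr (Htot A d1 d2 n)" and x: "x \<in> X"
  shows "hmap X = (\<lambda>i. dq i (n - i) (x i))"
proof
  fix i
  let ?y = "SOME x. x \<in> X"
  have xc: "x \<in> cycles A d1 d2 n" and Xx: "X = hq n x" using H_mem[OF X x] by auto
  have yc: "?y \<in> cycles A d1 d2 n" and Xy: "X = hq n ?y" using H_mem[OF X H_ne[OF X]] by auto
  have "madd (tot A n) ?y (mneg (tot A n) x) \<in> boundaries A d1 d2 n" using H_eq[OF yc xc] Xx Xy by simp
  then have "madd (A i (n - i)) (?y i) (mneg (A i (n - i)) (x i)) \<in> ND i (n - i)"
    using bnd_ND by (fastforce simp: tot_add tot_neg)
  then show "hmap X i = dq i (n - i) (x i)"
    unfolding hmap_def by (rule don_eqI[OF cyc_SD[OF yc] cyc_SD[OF xc]])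
qed

lemma hmap_hq: "x \<in> cycles A d1 d2 n \<Longrightarrow> hmap (hq n x) = (\<lambda>i. dq i (n - i) (x i))"
  by (rule hmap_rep[OF H_in H_self])

text \<open>hmap lands in the kernel of dbar: dbar of hmap X is the receptor class of totd x = 0.\<close>
lemma hmap_in:
  assumes x: "x \<in> cycles A d1 d2 n"
  shows "hmap (hq n x) \<in> carr (dbar_ker A d1 d2 n)"
proof -
  have xt: "x \<in> carr (tot A n)" and x0: "totd A d1 d2 n x = mzero (tot A (n + 1))"
    using x unfolding cycles_def by auto
  have "dbar A d1 d2 n (hmap (hq n x)) i = mzero (receptor A d1 d2 i (n - i + 1))" for i
  proof -
    have "totd A d1 d2 n x i = mzero (A i (n - i + 1))"
      using fun_cong[OF x0, of i] by (simp add: tot_zero add.commute add_diff_eq)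
    then show ?thesis using dbar_dq[OF xt cyc_SD[OF x]] by (simp add: hmap_hq[OF x] rec_zero)
  qed
  moreover have "hmap (hq n x) \<in> carr (donprod A d1 d2 n)"
    using cyc_SD[OF x] don_in by (simp add: hmap_hq[OF x] donprod_carr)
  ultimately show ?thesis unfolding dbar_ker_carr dbar_zero_iff by simp
qed

lemma hmap_hom: "rmod_hom (Htot A d1 d2 n) (dbar_ker A d1 d2 n) hmap"
  unfolding rmod_hom_def
proof (intro conjI ballI allI)
  show "hmap ` carr (Htot A d1 d2 n) \<subseteq> carr (dbar_ker A d1 d2 n)"
    by (auto simp: H_carr hmap_in)
next
  fix X Y assume "X \<in> carr (Htot A d1 d2 n)" "Y \<in> carr (Htot A d1 d2 n)"
  then obtain x y where x: "x \<in> cycles A d1 d2 n" "X = hq n x" and y: "y \<in> cycles A d1 d2 n" "Y = hq n y"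
    by (auto simp: H_carr)
  have "hmap (madd (Htot A d1 d2 n) X Y) = hmap (hq n (madd (tot A n) x y))" using x y by (simp add: H_add)
  also have "\<dots> = madd (dbar_ker A d1 d2 n) (hmap X) (hmap Y)"
    using x y submodD(3)[OF cyc_sub x(1) y(1)] cyc_SD[OF x(1)] cyc_SD[OF y(1)]
    by (simp add: hmap_hq tot_add dbar_ker_def donprod_add don_add)
  finally show "hmap (madd (Htot A d1 d2 n) X Y) = madd (dbar_ker A d1 d2 n) (hmap X) (hmap Y)" .
next
  fix a X assume "X \<in> carr (Htot A d1 d2 n)"
  then obtain x where x: "x \<in> cycles A d1 d2 n" "X = hq n x" by (auto simp: H_carr)
  have "hmap (msmul (Htot A d1 d2 n) a X) = hmap (hq n (msmul (tot A n) a x))" using x by (simp add: H_smul)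
  also have "\<dots> = msmul (dbar_ker A d1 d2 n) a (hmap X)"
    using x submodD(4)[OF cyc_sub x(1)] cyc_SD[OF x(1)]
    by (simp add: hmap_hq tot_smul dbar_ker_def donprod_smul don_smul)
  finally show "hmap (msmul (Htot A d1 d2 n) a X) = msmul (dbar_ker A d1 d2 n) a (hmap X)" .
qed

text \<open>Surjectivity: if the donor classes of z lie in the kernel of dbar, then totd z has
  components in im p = im (d1 d2), and correcting z by the corresponding vertical images
  (which does not change donor classes) yields a cycle.\<close>
lemma hmap_surj:
  assumes X: "X \<in> carr (dbar_ker A d1 d2 n)"
  shows "X \<in> hmap ` carr (Htot A d1 d2 n)"
proof -
  have Xi: "\<And>i. X i \<in> carr (donor A d1 d2 i (n - i))"
    and X0: "\<And>i. dbar A d1 d2 n X i = mzero (receptor A d1 d2 i (n - i + 1))"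
    using X unfolding dbar_ker_carr dbar_zero_iff donprod_carr by auto
  define z where "z i = (SOME x. x \<in> X i)" for i
  have zs: "\<And>i. z i \<in> SD i (n - i)" and Xz: "X = (\<lambda>i. dq i (n - i) (z i))"
    using don_rep[OF Xi] unfolding z_def by auto
  have zt: "z \<in> carr (tot A n)" unfolding tot_in using zs SDc by blast
  have "\<exists>c\<in>carr (A (i - 1) (n - i)). totd A d1 d2 n z i = d1 (i - 1) (n - i + 1) (d2 (i - 1) (n - i) c)" for i
  proof -
    have "rq i (n - i + 1) (totd A d1 d2 n z i) = rq i (n - i + 1) (mzero (A i (n - i + 1)))"
      using X0[of i] dbar_dq[OF zt zs, of i] Xz by (simp add: rec_zero)
    then have "totd A d1 d2 n z i \<in> NR i (n - i + 1)"
      using rec_eq[OF totd_SR[OF zt zs] SR_zero] totd_comp_in[OF zt] by simp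
    then show ?thesis unfolding NR_mem by simp
  qed
  then obtain c where c: "\<And>i. c i \<in> carr (A (i - 1) (n - i))"
    and ce: "\<And>i. totd A d1 d2 n z i = d1 (i - 1) (n - i + 1) (d2 (i - 1) (n - i) (c i))"
    by metis
  let ?x = "madd (tot A n) z (mneg (tot A n) (\<lambda>i. d1 (i - 1) (n - i) (c i)))"
  have xc: "?x \<in> cycles A d1 d2 n" using cycle_correction[OF zt c ce] .
  have "hmap (hq n ?x) = X"
    using hmap_hq[OF xc] dq_sub_d1[OF c zs] Xz by (simp add: tot_add tot_neg)
  then show ?thesis using H_in[OF xc] by blast
qed

end

section \<open>Peekaboo elements and the intramural map\<close>

context col_exact_dc_deg begin

text \<open>Total chains all of whose components lie in the receptor numerators (both differentials
  vanish on each component); these are exactly the representatives of elements in the image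
  of the intramural map.\<close>
definition rcycle where "rcycle y \<longleftrightarrow> y \<in> carr (tot A n) \<and> (\<forall>i. y i \<in> SR i (n - i))"

lemma rcycle_SR: "rcycle z \<Longrightarrow> z i \<in> SR i (n - i)" unfolding rcycle_def by simp
lemma rcycle_t: "rcycle z \<Longrightarrow> z \<in> carr (tot A n)" unfolding rcycle_def by simp

lemma rcycle_cyc:
  assumes y: "rcycle y"
  shows "y \<in> cycles A d1 d2 n"
proof -
  have yt: "y \<in> carr (tot A n)" and ys: "\<And>i. y i \<in> SR i (n - i)" using y unfolding rcycle_def by auto
  have "totd A d1 d2 n y i = mzero (tot A (n + 1)) i" for i
  proof -
    have a: "d2 i (n - i) (y i) = mzero (A i (n - i + 1))" using SR_d2[OF ys[of i]] .
    have b: "d1 (i - 1) (n - i + 1) (y (i - 1)) = mzero (A i (n - i + 1))" using SR_d1[OF ys[of "i - 1"]] unfolding idx_prev by simp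
    have e: "n + 1 - i = n - i + 1" by simp
    show ?thesis using a b by (simp add: totd_comp[of "n - i" n i "n - i + 1"] tot_zero A_idx[OF e])
  qed
  then show ?thesis unfolding cycles_def using yt by auto
qed

text \<open>A cycle whose components are horizontal cycles has vertical cycles as components as
  well, by the cycle condition d2 y_(i+1) = \<plusminus> d1 y_i.\<close>
lemma cycle_d2_zero_rcycle:
  assumes y: "y \<in> cycles A d1 d2 n" and y2: "\<And>i. d2 i (n - i) (y i) = mzero (A i (n - i + 1))"
  shows "rcycle y"
proof -
  have yc: "\<And>i. y i \<in> carr (A i (n - i))" using cyc_c[OF y] by simp
  have "d1 i (n - i) (y i) = mzero (A (i + 1) (n - i))" for i
  proof -
    let ?M = "A (i + 1) (n - i)"
    have "msmul ?M (- s) (d1 i (n - i) (y i)) = mzero ?M"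
      using cyc_d2[OF y, of "i + 1"] y2[of "i + 1"] unfolding idx_next idx_next_back by simp
    then have "msmul ?M (- s) (msmul ?M (- s) (d1 i (n - i) (y i))) = mzero ?M" by simp
    then show ?thesis using yc[of i] by (simp add: rm_smul_smul sg_sq)
  qed
  then show ?thesis unfolding rcycle_def using SR_I[OF yc y2] cycc y by auto
qed

text \<open>A total chain with all components in im p = im (d1 d2) is a total boundary: it is the
  total differential of the (sign-corrected) horizontal images of the same family.\<close>
lemma NR_family_boundary:
  assumes vt: "v \<in> carr (tot A n)" and vNR: "\<And>i. v i \<in> NR i (n - i)"
  shows "v \<in> boundaries A d1 d2 n"
proof -
  obtain c where c: "\<And>i. c i \<in> carr (A (i - 1) (n - i - 1))"
    and cv: "\<And>i. v i = d1 (i - 1) (n - i) (d2 (i - 1) (n - i - 1) (c i))"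
    using vNR unfolding NR_mem by metis
  have c1: "c (j + 1) \<in> carr (A j (n - j - 2))" for j
  proof -
    have e: "n - (j + 1) - 1 = n - j - 2" by simp
    show ?thesis using c[of "j + 1"] unfolding e by simp
  qed
  have e2: "\<And>j. n - j - 2 + 1 = n - j - 1" by simp
  have d2c: "d2 j (n - j - 2) (c (j + 1)) \<in> carr (A j (n - j - 1))" for j
    using d2_in[OF c1[of j]] unfolding e2 .
  define w where "w j = msmul (A j (n - j - 1)) (- s) (d2 j (n - j - 2) (c (j + 1)))" for j
  have wt: "w \<in> carr (tot A (n - 1))" unfolding tot_in idx_deg_pred w_def using d2c by simp
  have "totd A d1 d2 (n - 1) w = v"
  proof
    fix i
    have e: "n - (i - 1) - 2 = n - i - 1" by simp
    have wp: "w (i - 1) = msmul (A (i - 1) (n - i)) (- s) (d2 (i - 1) (n - i - 1) (c i))"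
      unfolding w_def idx_prev_back e by simp
    have "d2 i (n - i - 1) (d2 i (n - i - 2) (c (i + 1))) = mzero (A i (n - i))"
      using d22g[OF c1[of i], of "n - i - 1" "n - i"] by simp
    then have w0: "d2 i (n - i - 1) (w i) = mzero (A i (n - i))"
      unfolding w_def using d2c[of i] by (simp add: d2_smul)
    have "msmul (A i (n - i)) (- s) (d1 (i - 1) (n - i) (w (i - 1))) = v i"
      unfolding wp cv using c[of i] by (simp add: d1_smul rm_smul_smul sg_sq)
    then show "totd A d1 d2 (n - 1) w i = v i"
      using bnd_comp[OF wt, of i] w0 tot_ing[OF vt] by simp
  qed
  then show ?thesis unfolding boundaries_def using wt by auto
qed

text \<open>On receptor classes of an rcycle, the intramural map returns its total class: changing
  the chosen representatives changes the chain by a total boundary.\<close>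
lemma intra_rq:
  assumes y: "rcycle y"
  shows "intramural A d1 d2 n (\<lambda>i. rq i (n - i) (y i)) = hq n y"
proof -
  have yt: "y \<in> carr (tot A n)" and ys: "\<And>i. y i \<in> SR i (n - i)" using y unfolding rcycle_def by auto
  define u where "u i = (SOME u. u \<in> rq i (n - i) (y i))" for i
  have us: "\<And>i. u i \<in> SR i (n - i)" and ud: "\<And>i. madd (A i (n - i)) (u i) (mneg (A i (n - i)) (y i)) \<in> NR i (n - i)"
    using rec_some[OF ys] unfolding u_def by auto
  have ut: "u \<in> carr (tot A n)" unfolding tot_in using us SR_c by blast
  have "madd (tot A n) u (mneg (tot A n) y) \<in> boundaries A d1 d2 n"
    using NR_family_boundary[OF rm_add[OF tot_mod ut rm_neg_closed[OF tot_mod yt]]] ud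
    by (simp add: tot_add tot_neg)
  then have "hq n u = hq n y"
    using H_eqI[OF rcycle_cyc rcycle_cyc[OF y]] ut us unfolding rcycle_def by simp
  moreover have "intramural A d1 d2 n (\<lambda>i. rq i (n - i) (y i)) = hq n u"
    unfolding intramural_def u_def by simp
  ultimately show ?thesis by simp
qed

definition yrep where "yrep Y = (\<lambda>i. SOME u. u \<in> Y i)"

lemma yrep:
  assumes Y: "Y \<in> carr (recprod A d1 d2 n)"
  shows "rcycle (yrep Y)" "Y = (\<lambda>i. rq i (n - i) (yrep Y i))" "intramural A d1 d2 n Y = hq n (yrep Y)"
proof -
  have Yi: "\<And>i. Y i \<in> carr (receptor A d1 d2 i (n - i))" using Y unfolding recprod_carr by simp
  have ys: "\<And>i. yrep Y i \<in> SR i (n - i)" and yq: "\<And>i. rq i (n - i) (yrep Y i) = Y i"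
    using rec_rep[OF Yi] unfolding yrep_def by auto
  have yt: "yrep Y \<in> carr (tot A n)" unfolding tot_in using ys SR_c by blast
  show "rcycle (yrep Y)" unfolding rcycle_def using yt ys by simp
  show "Y = (\<lambda>i. rq i (n - i) (yrep Y i))" using yq by simp
  show "intramural A d1 d2 n Y = hq n (yrep Y)" unfolding intramural_def yrep_def ..
qed

end

context col_exact_dc_deg begin

definition echain where
  "echain p t j = (if j = p - 1 then msmul (A (p - 1) (n - p)) s t else mzero (A j (n - j - 1)))"

lemma echain_tot:
  assumes t: "t \<in> carr (A (p - 1) (n - p))"
  shows "echain p t \<in> carr (tot A (n - 1))"
proof -
  have e: "n - (p - 1) - 1 = n - p" by simp
  have "echain p t j \<in> carr (A j (n - j - 1))" for j
    using t unfolding echain_def by (cases "j = p - 1") (simp_all add: e)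
  then show ?thesis unfolding tot_in idx_deg_pred by simp
qed

lemma elementary_boundary:
  assumes t: "t \<in> carr (A (p - 1) (n - p))"
  shows "\<exists>\<beta>\<in>boundaries A d1 d2 n. \<beta> p = mneg (A p (n - p)) (d1 (p - 1) (n - p) t)
     \<and> \<beta> (p - 1) = msmul (A (p - 1) (n - p + 1)) s (d2 (p - 1) (n - p) t)
     \<and> (\<forall>i. i \<noteq> p \<longrightarrow> i \<noteq> p - 1 \<longrightarrow> \<beta> i = mzero (A i (n - i)))"
proof -
  let ?w = "echain p t"
  let ?b = "totd A d1 d2 (n - 1) ?w"
  have wt: "?w \<in> carr (tot A (n - 1))" using echain_tot[OF t] .
  have bc: "?b i = madd (A i (n - i)) (d2 i (n - i - 1) (?w i)) (msmul (A i (n - i)) (- s) (d1 (i - 1) (n - i) (?w (i - 1))))" for i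
    using bnd_comp[OF wt] by simp
  have wz: "i \<noteq> p - 1 \<Longrightarrow> ?w i = mzero (A i (n - i - 1))" for i unfolding echain_def by simp
  have wzp: "i \<noteq> p \<Longrightarrow> ?w (i - 1) = mzero (A (i - 1) (n - i))" for i
    unfolding echain_def idx_prev_back by simp
  have wp: "?w (p - 1) = msmul (A (p - 1) (n - p)) s t" unfolding echain_def by simp
  have b1: "?b p = mneg (A p (n - p)) (d1 (p - 1) (n - p) t)"
    using bc[of p] wz[of p] wp t by (simp add: d1_smul rm_smul_smul sg_sq mneg_def)
  have b2: "?b (p - 1) = msmul (A (p - 1) (n - p + 1)) s (d2 (p - 1) (n - p) t)"
  proof -
    have e: "p - 1 - 1 = p - 2" and e2: "n - p + 1 - 1 = n - p" and e3: "n - (p - 2) - 1 = n - p + 1" by simp_all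
    have "?b (p - 1) = madd (A (p - 1) (n - p + 1)) (d2 (p - 1) (n - p) (?w (p - 1)))
        (msmul (A (p - 1) (n - p + 1)) (- s) (d1 (p - 2) (n - p + 1) (?w (p - 2))))"
      using bc[of "p - 1"] unfolding idx_prev_back idx_prev e e2 .
    moreover have "?w (p - 2) = mzero (A (p - 2) (n - p + 1))" unfolding echain_def e3 by simp
    moreover have "d1 (p - 2) (n - p + 1) (mzero (A (p - 2) (n - p + 1))) = mzero (A (p - 1) (n - p + 1))"
      by (rule d1_zerog) simp
    ultimately show ?thesis using t wp by (simp add: d2_smul)
  qed
  have b3: "?b i = mzero (A i (n - i))" if "i \<noteq> p" "i \<noteq> p - 1" for i
  proof -
    have "d2 i (n - i - 1) (mzero (A i (n - i - 1))) = mzero (A i (n - i))" by (rule d2_zerog) simp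
    moreover have "d1 (i - 1) (n - i) (mzero (A (i - 1) (n - i))) = mzero (A i (n - i))" by (rule d1_zerog) simp
    ultimately show ?thesis using bc[of i] wz[OF that(2)] wzp[OF that(1)] by simp
  qed
  have "?b \<in> boundaries A d1 d2 n" unfolding boundaries_def using wt by simp
  then show ?thesis using b1 b2 b3 by blast
qed

lemma d2_SR_of_d1:
  assumes t: "t \<in> carr (A (p - 1) (n - p))" and h: "d2 p (n - p) (d1 (p - 1) (n - p) t) = mzero (A p (n - p + 1))"
  shows "d2 (p - 1) (n - p) t \<in> SR (p - 1) (n - p + 1)"
proof (rule SR_I)
  show "d2 (p - 1) (n - p) t \<in> carr (A (p - 1) (n - p + 1))" using t by simp
  show "d2 (p - 1) (n - p + 1) (d2 (p - 1) (n - p) t) = mzero (A (p - 1) (n - p + 1 + 1))"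
    by (rule d22g[OF t]) simp_all
  have "d1 (p - 1) (n - p + 1) (d2 (p - 1) (n - p) t) = d2 p (n - p) (d1 (p - 1) (n - p) t)"
    by (rule d12g[OF t]) simp_all
  then show "d1 (p - 1) (n - p + 1) (d2 (p - 1) (n - p) t) = mzero (A (p - 1 + 1) (n - p + 1))"
    using h by simp
qed

text \<open>A single entry of an rcycle can be cleared by adding an elementary boundary: the entry
  is a vertical cycle, hence d1 t, and the boundary of t changes only rows p and p - 1, the
  new entry at p - 1 still lying in the receptor numerator.\<close>
lemma clear_entry:
  assumes z: "rcycle z"
  obtains \<beta> where "\<beta> \<in> boundaries A d1 d2 n" "rcycle (madd (tot A n) z \<beta>)"
    "madd (tot A n) z \<beta> p = mzero (A p (n - p))"
    "\<And>i. i \<noteq> p \<Longrightarrow> i \<noteq> p - 1 \<Longrightarrow> madd (tot A n) z \<beta> i = z i"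
proof -
  have zp: "z p \<in> SR p (n - p)" using rcycle_SR[OF z] .
  obtain t where t: "t \<in> carr (A (p - 1) (n - p))" "z p = d1 (p - 1) (n - p) t"
    using exact[OF SR_c[OF zp] SR_d1[OF zp]] by blast
  obtain \<beta> where bB: "\<beta> \<in> boundaries A d1 d2 n" and b1: "\<beta> p = mneg (A p (n - p)) (d1 (p - 1) (n - p) t)"
    and b2: "\<beta> (p - 1) = msmul (A (p - 1) (n - p + 1)) s (d2 (p - 1) (n - p) t)"
    and b3: "\<And>i. i \<noteq> p \<Longrightarrow> i \<noteq> p - 1 \<Longrightarrow> \<beta> i = mzero (A i (n - i))"
    using elementary_boundary[OF t(1)] by blast
  let ?z = "madd (tot A n) z \<beta>"
  have zc: "\<And>i. z i \<in> carr (A i (n - i))" using rcycle_t[OF z] tot_ing by blast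
  have zi: "?z i = madd (A i (n - i)) (z i) (\<beta> i)" for i by (simp add: tot_add)
  have zpv: "?z p = mzero (A p (n - p))" using zi[of p] b1 t zc[of p] by simp
  have zo: "i \<noteq> p \<Longrightarrow> i \<noteq> p - 1 \<Longrightarrow> ?z i = z i" for i using zi[of i] b3[of i] zc[of i] by simp
  have dS: "d2 (p - 1) (n - p) t \<in> SR (p - 1) (n - p + 1)"
    using d2_SR_of_d1[OF t(1)] SR_d2[OF zp] t(2) by simp
  have "?z i \<in> SR i (n - i)" for i
  proof -
    consider "i = p" | "i = p - 1" | "i \<noteq> p \<and> i \<noteq> p - 1" by blast
    then show ?thesis
    proof cases
      case 1 then show ?thesis using zpv SR_zero by simp
    next
      case 2
      have zS: "z (p - 1) \<in> SR (p - 1) (n - p + 1)" using rcycle_SR[OF z, of "p - 1"] unfolding idx_prev .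
      have "?z (p - 1) \<in> SR (p - 1) (n - p + 1)"
        using zi[of "p - 1"] b2 SR_add[OF zS SR_smul[OF dS]] unfolding idx_prev by simp
      then show ?thesis by (simp only: 2 idx_prev)
    next
      case 3 then show ?thesis using zo rcycle_SR[OF z] by simp
    qed
  qed
  moreover have "?z \<in> carr (tot A n)" using subsetD[OF submodD(1)[OF bnd_sub] bB] rcycle_t[OF z] rm_add[OF tot_mod] by blast
  ultimately have "rcycle ?z" unfolding rcycle_def by simp
  then show ?thesis using that bB zpv zo by blast
qed

text \<open>Clearing entries one at a time (from b downwards), any window of k consecutive entries
  of an rcycle can be made zero within its cohomology class.\<close>
lemma clear_window:
  assumes y: "rcycle y"
  shows "\<exists>z\<in>hq n y. rcycle z \<and> (\<forall>j. b - int k < j \<and> j \<le> b \<longrightarrow> z j = mzero (A j (n - j)))"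
proof (induction k)
  case 0
  show ?case using H_self[OF rcycle_cyc[OF y]] y by auto
next
  case (Suc k)
  then obtain z where z: "z \<in> hq n y" "rcycle z" and zz: "\<And>j. b - int k < j \<Longrightarrow> j \<le> b \<Longrightarrow> z j = mzero (A j (n - j))"
    by blast
  obtain \<beta> where bB: "\<beta> \<in> boundaries A d1 d2 n" and zb: "rcycle (madd (tot A n) z \<beta>)"
    and zp: "madd (tot A n) z \<beta> (b - int k) = mzero (A (b - int k) (n - (b - int k)))"
    and zo: "\<And>i. i \<noteq> b - int k \<Longrightarrow> i \<noteq> b - int k - 1 \<Longrightarrow> madd (tot A n) z \<beta> i = z i"
    using clear_entry[OF z(2), of "b - int k"] by blast
  have "madd (tot A n) z \<beta> \<in> hq n y" using hq_add_bnd[OF z(1) rcycle_t[OF y] bB] .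
  moreover have "madd (tot A n) z \<beta> j = mzero (A j (n - j))" if "b - int (Suc k) < j" "j \<le> b" for j
    using that zp zo[of j] zz[of j] by (cases "j = b - int k") auto
  ultimately show ?case using zb by blast
qed

text \<open>Images of the intramural map are peekaboo elements: a finite set of rows lies in a window.\<close>
lemma intra_PB:
  assumes Y: "Y \<in> carr (recprod A d1 d2 n)"
  shows "intramural A d1 d2 n Y \<in> PB A d1 d2 n"
proof -
  have yb: "rcycle (yrep Y)" and iy: "intramural A d1 d2 n Y = hq n (yrep Y)" using yrep[OF Y] by auto
  have "\<exists>x\<in>hq n (yrep Y). \<forall>i\<in>I. x i = mzero (A i (n - i))" if I: "finite I" for I
  proof (cases "I = {}")
    case True then show ?thesis using H_self[OF rcycle_cyc[OF yb]] by blast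
  next
    case False
    obtain z where z: "z \<in> hq n (yrep Y)"
      and zw: "\<And>j. Max I - int (nat (Max I - Min I + 1)) < j \<Longrightarrow> j \<le> Max I \<Longrightarrow> z j = mzero (A j (n - j))"
      using clear_window[OF yb, of "Max I" "nat (Max I - Min I + 1)"] by blast
    have "Min I \<le> i \<and> i \<le> Max I" if "i \<in> I" for i using that I False by auto
    then have "\<forall>i\<in>I. z i = mzero (A i (n - i))" using zw by force
    then show ?thesis using z by blast
  qed
  then show ?thesis unfolding PB_def iy using H_in[OF rcycle_cyc[OF yb]] by blast
qed

text \<open>Peekaboo elements lie in the kernel of hmap: each donor component can be read off a
  representative vanishing at that row.\<close>
lemma PB_hmap_zero:
  assumes X: "X \<in> PB A d1 d2 n"
  shows "hmap X = mzero (dbar_ker A d1 d2 n)"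
proof
  fix i
  have XH: "X \<in> carr (Htot A d1 d2 n)" using X unfolding PB_def by simp
  obtain x where x: "x \<in> X" "x i = mzero (A i (n - i))" using X unfolding PB_def by (auto dest!: spec[of _ "{i}"])
  show "hmap X i = mzero (dbar_ker A d1 d2 n) i"
    using hmap_rep[OF XH x(1)] x(2) by (simp add: dbar_ker_def donprod_def don_zero)
qed

text \<open>If all components of a cycle lie in the donor denominators, then a total boundary has
  the same horizontal differentials: it is built from the vertical parts of the components.\<close>
lemma ND_family_d2_match:
  assumes xt: "x \<in> carr (tot A n)" and xND: "\<And>i. x i \<in> ND i (n - i)"
  obtains b where "b \<in> boundaries A d1 d2 n" "\<And>i. d2 i (n - i) (b i) = d2 i (n - i) (x i)"
proof -
  obtain a bb where a: "\<And>i. a i \<in> carr (A (i - 1) (n - i))" and bb: "\<And>i. bb i \<in> carr (A i (n - i - 1))"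
    and xab: "\<And>i. x i = madd (A i (n - i)) (d1 (i - 1) (n - i) (a i)) (d2 i (n - i - 1) (bb i))"
    using xND unfolding ND_mem by metis
  define w where "w j = msmul (A j (n - j - 1)) (- s) (a (j + 1))" for j
  have wc: "w j \<in> carr (A j (n - j - 1))" for j unfolding w_def using a[of "j + 1"] unfolding idx_next by simp
  have wt: "w \<in> carr (tot A (n - 1))" unfolding tot_in idx_deg_pred using wc by simp
  let ?b = "totd A d1 d2 (n - 1) w"
  have "d2 i (n - i) (?b i) = d2 i (n - i) (x i)" for i
  proof -
    let ?M = "A i (n - i + 1)"
    have wp: "w (i - 1) = msmul (A (i - 1) (n - i)) (- s) (a i)" unfolding w_def idx_prev_back by simp
    have bi: "?b i = madd (A i (n - i)) (d2 i (n - i - 1) (w i)) (d1 (i - 1) (n - i) (a i))"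
      using bnd_comp[OF wt, of i] a[of i] unfolding wp by (simp add: d1_smul rm_smul_smul sg_sq)
    have dd: "\<And>v. v \<in> carr (A i (n - i - 1)) \<Longrightarrow> d2 i (n - i) (d2 i (n - i - 1) v) = mzero ?M"
      by (rule d22g) simp_all
    have di: "\<And>v. v \<in> carr (A i (n - i - 1)) \<Longrightarrow> d2 i (n - i - 1) v \<in> carr (A i (n - i))"
      by (rule d2_in_idx) simp_all
    have "d2 i (n - i) (d1 (i - 1) (n - i) (a i)) \<in> carr ?M" using a[of i] by simp
    then show ?thesis
      using bi xab[of i] a[of i] dd[OF bb[of i]] di[OF bb[of i]] dd[OF wc[of i]] di[OF wc[of i]]
      by (simp add: d2_add rm_comm[OF Am])
  qed
  then show ?thesis using that wt unfolding boundaries_def by blast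
qed

lemma hmap_zero_intra:
  assumes X: "X \<in> carr (Htot A d1 d2 n)" and h0: "hmap X = mzero (dbar_ker A d1 d2 n)"
  shows "X \<in> intramural A d1 d2 n ` carr (recprod A d1 d2 n)"
proof -
  obtain x where xc: "x \<in> cycles A d1 d2 n" and Xx: "X = hq n x" using X by (auto simp: H_carr)
  have xt: "x \<in> carr (tot A n)" and xi: "\<And>i. x i \<in> carr (A i (n - i))" using xc cycc cyc_c by auto
  have "x i \<in> ND i (n - i)" for i
  proof -
    have "dq i (n - i) (x i) = dq i (n - i) (mzero (A i (n - i)))"
      using fun_cong[OF h0, of i] hmap_hq[OF xc] Xx by (simp add: dbar_ker_def donprod_def don_zero)
    then show ?thesis using don_eq[OF cyc_SD[OF xc] SD_zero] xi by simp
  qed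
  then obtain b where bB: "b \<in> boundaries A d1 d2 n" and bx: "\<And>i. d2 i (n - i) (b i) = d2 i (n - i) (x i)"
    using ND_family_d2_match[OF xt] by blast
  have bt: "b \<in> carr (tot A n)" using bB submodD(1)[OF bnd_sub] by auto
  let ?y = "madd (tot A n) x (mneg (tot A n) b)"
  have yX: "hq n ?y = X"
    using H_eqI[OF _ xc] submodD(3)[OF cyc_sub xc submod_neg[OF cyc_sub subsetD[OF bnd_cyc bB]]]
      submod_neg[OF bnd_sub bB] rm_diff_self[OF tot_mod xt bt] Xx by simp
  have ycyc: "?y \<in> cycles A d1 d2 n" using submodD(3)[OF cyc_sub xc submod_neg[OF cyc_sub subsetD[OF bnd_cyc bB]]] .
  have "d2 i (n - i) (?y i) = mzero (A i (n - i + 1))" for i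
    using bx[of i] xi[of i] tot_ing[OF bt] by (simp add: tot_add tot_neg d2_add d2_neg)
  then have yb: "rcycle ?y" using cycle_d2_zero_rcycle[OF ycyc] by blast
  have "(\<lambda>i. rq i (n - i) (?y i)) \<in> carr (recprod A d1 d2 n)" unfolding recprod_carr using rcycle_SR[OF yb] rec_in by simp
  moreover have "intramural A d1 d2 n (\<lambda>i. rq i (n - i) (?y i)) = X" using intra_rq[OF yb] yX by simp
  ultimately show ?thesis by blast
qed

lemma PB_intra: "PB A d1 d2 n = intramural A d1 d2 n ` carr (recprod A d1 d2 n)"
  using hmap_zero_intra PB_hmap_zero intra_PB unfolding PB_def by blast

lemma hmap_kernel: "mker (Htot A d1 d2 n) (dbar_ker A d1 d2 n) hmap = PB A d1 d2 n"
proof (intro equalityI subsetI)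
  fix X assume "X \<in> mker (Htot A d1 d2 n) (dbar_ker A d1 d2 n) hmap"
  then show "X \<in> PB A d1 d2 n" unfolding mker_def PB_intra using hmap_zero_intra by blast
next
  fix X assume "X \<in> PB A d1 d2 n"
  then show "X \<in> mker (Htot A d1 d2 n) (dbar_ker A d1 d2 n) hmap"
    unfolding mker_def using PB_hmap_zero by (auto simp: PB_def)
qed

end

section \<open>The inverse limits\<close>

context col_exact_dc_deg begin

abbreviation phi where "phi i \<equiv> (the_inv_into (carr (donor A d1 d2 i (n - i))) (ext_v A d1 d2 i (n - i))
              \<circ> ext_h A d1 d2 (i + 1) (n - i - 1))"

abbreviation psi where "psi i \<equiv> (ext_h A d1 d2 i (n - i)
              \<circ> the_inv_into (carr (donor A d1 d2 i (n - i))) (ext_v A d1 d2 i (n - i)))"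

lemma DL_carr: "carr (donor_lim A d1 d2 n) = {Z. (\<forall>i. Z i \<in> carr (donor A d1 d2 i (n - i))) \<and> (\<forall>i. Z i = phi i (Z (i + 1)))}"
  unfolding donor_lim_def invlim_def by auto
lemma RL_carr: "carr (receptor_lim A d1 d2 n) = {Y. (\<forall>i. Y i \<in> carr (receptor A d1 d2 i (n - i + 1))) \<and> (\<forall>i. Y i = psi i (Y (i + 1)))}"
  unfolding receptor_lim_def invlim_def by auto

lemma DL_sub: "donor_lim A d1 d2 n = sub_rmod (prod_rmod (\<lambda>i. donor A d1 d2 i (n - i))) (carr (donor_lim A d1 d2 n))"
  unfolding donor_lim_def invlim_def by (simp add: sub_rmod_def)
lemma RL_sub: "receptor_lim A d1 d2 n = sub_rmod (prod_rmod (\<lambda>i. receptor A d1 d2 i (n - i + 1))) (carr (receptor_lim A d1 d2 n))"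
  unfolding receptor_lim_def invlim_def by (simp add: sub_rmod_def)
lemma K_sub: "dbar_ker A d1 d2 n = sub_rmod (prod_rmod (\<lambda>i. donor A d1 d2 i (n - i))) (carr (dbar_ker A d1 d2 n))"
  unfolding dbar_ker_def donprod_def by (simp add: sub_rmod_def)

lemma compat_iff:
  assumes a: "Z i \<in> carr (donor A d1 d2 i (n - i))" and b: "Z (i + 1) \<in> carr (donor A d1 d2 (i + 1) (n - (i + 1)))"
  shows "Z i = phi i (Z (i + 1)) \<longleftrightarrow> ext_v A d1 d2 i (n - i) (Z i) = ext_h A d1 d2 (i + 1) (n - i - 1) (Z (i + 1))"
proof -
  have hin: "ext_h A d1 d2 (i + 1) (n - i - 1) (Z (i + 1)) \<in> carr (receptor A d1 d2 (i + 1) (n - i))"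
    using ext_h_in[of "Z (i + 1)" "i + 1" "n - i - 1"] b unfolding idx_next by simp
  show ?thesis
  proof
    assume "Z i = phi i (Z (i + 1))"
    then show "ext_v A d1 d2 i (n - i) (Z i) = ext_h A d1 d2 (i + 1) (n - i - 1) (Z (i + 1))"
      using ext_v_inv[OF hin] by simp
  next
    assume "ext_v A d1 d2 i (n - i) (Z i) = ext_h A d1 d2 (i + 1) (n - i - 1) (Z (i + 1))"
    then show "Z i = phi i (Z (i + 1))" using inv_ext_v[OF a] by simp
  qed
qed

lemma DL_elem:
  assumes Z: "Z \<in> carr (donor_lim A d1 d2 n)"
  shows "Z i \<in> carr (donor A d1 d2 i (n - i))" "Z i = phi i (Z (i + 1))"
proof -
  have ZZ: "(\<forall>i. Z i \<in> carr (donor A d1 d2 i (n - i))) \<and> (\<forall>i. Z i = phi i (Z (i + 1)))"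
    using Z unfolding DL_carr by (rule CollectD)
  then show "Z i \<in> carr (donor A d1 d2 i (n - i))" "Z i = phi i (Z (i + 1))" by (blast, blast)
qed

lemma DL_compat:
  assumes Z: "Z \<in> carr (donor_lim A d1 d2 n)"
  shows "ext_v A d1 d2 (i - 1) (n - i + 1) (Z (i - 1)) = ext_h A d1 d2 i (n - i) (Z i)"
proof -
  have "ext_v A d1 d2 (i - 1) (n - (i - 1)) (Z (i - 1)) = ext_h A d1 d2 (i - 1 + 1) (n - (i - 1) - 1) (Z (i - 1 + 1))"
    using compat_iff[of Z "i - 1", OF DL_elem(1)[OF Z] DL_elem(1)[OF Z]] DL_elem(2)[OF Z, of "i - 1"] by simp
  then show ?thesis unfolding idx_prev_back idx_prev by simp
qed

text \<open>The sign twist eps i = (-1)^((n+1) i) turns the cocycle condition of dbar,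
  ext_h X_i + s ext_v X_(i-1) = 0, into the compatibility ext_v Z_(i-1) = ext_h Z_i.\<close>
definition eps :: "int \<Rightarrow> 'r" where "eps i = sg ((n + 1) * i)"

lemma eps_succ: "s * eps i = - eps (i + 1)" by (auto simp: eps_def sg_def algebra_simps)
lemma eps_sq: "eps i * eps i = 1" by (simp add: eps_def sg_sq)
lemma eps_comm: "a * eps i = eps i * a" by (simp add: eps_def sg_comm)

lemma rm_eps_eps: "is_rmod M \<Longrightarrow> x \<in> carr M \<Longrightarrow> msmul M (eps i) (msmul M (eps i) x) = x"
  by (simp add: rm_smul_smul eps_sq)

definition kmap where "kmap Z = (\<lambda>i. msmul (donor A d1 d2 i (n - i)) (eps i) (Z i))"

lemma kmap_carr: "Z \<in> carr (donprod A d1 d2 n) \<Longrightarrow> kmap Z \<in> carr (donprod A d1 d2 n)"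
  unfolding kmap_def donprod_carr using don_mod by simp

lemma kmap_kmap: "Z \<in> carr (donprod A d1 d2 n) \<Longrightarrow> kmap (kmap Z) = Z"
  unfolding kmap_def donprod_carr using rm_eps_eps[OF don_mod] by auto

lemma dbar_kmap:
  assumes Z: "Z \<in> carr (donprod A d1 d2 n)"
  shows "dbar A d1 d2 n (kmap Z) (i + 1) = msmul (receptor A d1 d2 (i + 1) (n - i)) (eps (i + 1))
     (madd (receptor A d1 d2 (i + 1) (n - i)) (ext_h A d1 d2 (i + 1) (n - i - 1) (Z (i + 1)))
       (mneg (receptor A d1 d2 (i + 1) (n - i)) (ext_v A d1 d2 i (n - i) (Z i))))"
proof -
  let ?R = "receptor A d1 d2 (i + 1) (n - i)"
  have Z0: "Z i \<in> carr (donor A d1 d2 i (n - i))" and "Z (i + 1) \<in> carr (donor A d1 d2 (i + 1) (n - (i + 1)))"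
    using Z unfolding donprod_carr by auto
  then have Z1: "Z (i + 1) \<in> carr (donor A d1 d2 (i + 1) (n - i - 1))" unfolding idx_next[symmetric] by blast
  have Hc: "ext_h A d1 d2 (i + 1) (n - i - 1) (Z (i + 1)) \<in> carr ?R" using ext_h_in[OF Z1] by simp
  have Vc: "ext_v A d1 d2 i (n - i) (Z i) \<in> carr ?R" using ext_v_in[OF Z0] .
  have e: "n - (i + 1) + 1 = n - i" by simp
  have "dbar A d1 d2 n (kmap Z) (i + 1) = madd ?R (msmul ?R (eps (i + 1)) (ext_h A d1 d2 (i + 1) (n - i - 1) (Z (i + 1))))
      (msmul ?R (s * eps i) (ext_v A d1 d2 i (n - i) (Z i)))"
    unfolding dbar_comp e kmap_def idx_next using homD(3)[OF ext_h_hom Z1] homD(3)[OF ext_v_hom Z0] Vc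
    by (simp add: rm_smul_smul[OF rec_mod])
  then show ?thesis using Hc Vc
    by (simp add: eps_succ rm_smul_add[OF rec_mod] rm_neg_smul[OF rec_mod] rm_smul_neg[OF rec_mod] rm_neg_closed[OF rec_mod])
qed

lemma kmap_ker_iff:
  assumes Z: "Z \<in> carr (donprod A d1 d2 n)"
  shows "kmap Z \<in> carr (dbar_ker A d1 d2 n) \<longleftrightarrow> Z \<in> carr (donor_lim A d1 d2 n)"
proof -
  have Zi: "\<And>i. Z i \<in> carr (donor A d1 d2 i (n - i))" using Z unfolding donprod_carr by simp
  have step: "dbar A d1 d2 n (kmap Z) (i + 1) = mzero (receptor A d1 d2 (i + 1) (n - i)) \<longleftrightarrow> Z i = phi i (Z (i + 1))" for i
  proof -
    let ?R = "receptor A d1 d2 (i + 1) (n - i)"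
    let ?D = "madd ?R (ext_h A d1 d2 (i + 1) (n - i - 1) (Z (i + 1))) (mneg ?R (ext_v A d1 d2 i (n - i) (Z i)))"
    have Z1: "Z (i + 1) \<in> carr (donor A d1 d2 (i + 1) (n - i - 1))" using Zi[of "i + 1"] unfolding idx_next .
    have Hc: "ext_h A d1 d2 (i + 1) (n - i - 1) (Z (i + 1)) \<in> carr ?R" using ext_h_in[OF Z1] by simp
    have Vc: "ext_v A d1 d2 i (n - i) (Z i) \<in> carr ?R" using ext_v_in[OF Zi] .
    have "msmul ?R (eps (i + 1)) ?D = mzero ?R \<longleftrightarrow> ?D = mzero ?R"
      using rm_unit_smul_zero[OF rec_mod _ eps_sq] Hc Vc rec_mod by simp
    also have "\<dots> \<longleftrightarrow> ext_h A d1 d2 (i + 1) (n - i - 1) (Z (i + 1)) = ext_v A d1 d2 i (n - i) (Z i)"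
      using rm_eq_iff[OF rec_mod Hc Vc] by simp
    finally show ?thesis using dbar_kmap[OF Z] compat_iff[of Z i] Zi Zi[of "i + 1"] by auto
  qed
  have "kmap Z \<in> carr (dbar_ker A d1 d2 n) \<longleftrightarrow> (\<forall>i. dbar A d1 d2 n (kmap Z) (i + 1) = mzero (receptor A d1 d2 (i + 1) (n - i)))"
  proof -
    have e: "\<And>i. n - (i + 1) + 1 = n - i" by simp
    have "(\<forall>i. dbar A d1 d2 n (kmap Z) i = mzero (receptor A d1 d2 i (n - i + 1)))
        \<longleftrightarrow> (\<forall>i. dbar A d1 d2 n (kmap Z) (i + 1) = mzero (receptor A d1 d2 (i + 1) (n - (i + 1) + 1)))"
      by (metis diff_add_cancel)
    then show ?thesis unfolding dbar_ker_carr dbar_zero_iff e using kmap_carr[OF Z] by simp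
  qed
  also have "\<dots> \<longleftrightarrow> Z \<in> carr (donor_lim A d1 d2 n)" unfolding DL_carr step using Zi by auto
  finally show ?thesis .
qed

lemma DL_donprod: "carr (donor_lim A d1 d2 n) \<subseteq> carr (donprod A d1 d2 n)"
  unfolding DL_carr donprod_carr by auto

lemma K_donprod: "carr (dbar_ker A d1 d2 n) \<subseteq> carr (donprod A d1 d2 n)"
  unfolding dbar_ker_carr by auto

lemma kmap_image: "kmap ` carr (donor_lim A d1 d2 n) = carr (dbar_ker A d1 d2 n)"
proof (intro equalityI subsetI)
  fix X assume "X \<in> kmap ` carr (donor_lim A d1 d2 n)"
  then show "X \<in> carr (dbar_ker A d1 d2 n)" using kmap_ker_iff DL_donprod by blast
next
  fix X assume X: "X \<in> carr (dbar_ker A d1 d2 n)"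
  then have "X \<in> carr (donprod A d1 d2 n)" using K_donprod by blast
  then have "kmap X \<in> carr (donor_lim A d1 d2 n)" "kmap (kmap X) = X"
    using kmap_ker_iff[OF kmap_carr] kmap_kmap X by auto
  then show "X \<in> kmap ` carr (donor_lim A d1 d2 n)" by (metis image_eqI)
qed

lemma kmap_image': "kmap ` carr (dbar_ker A d1 d2 n) = carr (donor_lim A d1 d2 n)"
proof (intro equalityI subsetI)
  fix Z assume "Z \<in> kmap ` carr (dbar_ker A d1 d2 n)"
  then obtain X where X: "X \<in> carr (dbar_ker A d1 d2 n)" "Z = kmap X" by blast
  then have "X \<in> carr (donprod A d1 d2 n)" using K_donprod by blast
  then show "Z \<in> carr (donor_lim A d1 d2 n)" using kmap_ker_iff[OF kmap_carr] kmap_kmap X by auto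
next
  fix Z assume Z: "Z \<in> carr (donor_lim A d1 d2 n)"
  then have "kmap Z \<in> carr (dbar_ker A d1 d2 n)" "kmap (kmap Z) = Z"
    using kmap_ker_iff kmap_kmap DL_donprod by auto
  then show "Z \<in> kmap ` carr (dbar_ker A d1 d2 n)" by (metis image_eqI)
qed

text \<open>The sign twist is an isomorphism in both directions, since it is levelwise the
  multiplication by a unit.\<close>
lemma kmap_iso:
  assumes C: "C \<subseteq> carr (donprod A d1 d2 n)"
    and img: "kmap ` C = D"
  shows "rmod_iso (sub_rmod (donprod A d1 d2 n) C) (sub_rmod (donprod A d1 d2 n) D) kmap"
  unfolding kmap_def donprod_def
proof (rule levelwise_iso[where \<sigma> = id, simplified])
  show "rmod_hom (donor A d1 d2 i (n - i)) (donor A d1 d2 i (n - i)) (msmul (donor A d1 d2 i (n - i)) (eps i))" for i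
    unfolding rmod_hom_def using don_mod by (auto simp: rm_smul_add rm_smul_smul eps_comm)
  show "inj_on (msmul (donor A d1 d2 i (n - i)) (eps i)) (carr (donor A d1 d2 i (n - i)))" for i
    by (rule inj_on_inverseI[where g = "msmul (donor A d1 d2 i (n - i)) (eps i)"]) (rule rm_eps_eps[OF don_mod])
qed (use C img in \<open>simp_all add: kmap_def donprod_def\<close>)

lemma DL_K_iso: "rmod_iso (donor_lim A d1 d2 n) (dbar_ker A d1 d2 n) kmap"
  using kmap_iso[OF DL_donprod kmap_image] DL_sub K_sub unfolding donprod_def by simp

lemma K_DL_iso: "rmod_iso (dbar_ker A d1 d2 n) (donor_lim A d1 d2 n) kmap"
  using kmap_iso[OF K_donprod kmap_image'] DL_sub K_sub unfolding donprod_def by simp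

end

context col_exact_dc_deg begin

lemma kmap_zero: "kmap (mzero (dbar_ker A d1 d2 n)) = mzero (donor_lim A d1 d2 n)"
  unfolding kmap_def dbar_ker_def donprod_def donor_lim_def invlim_def using don_mod by simp

lemma hmap_image: "hmap ` carr (Htot A d1 d2 n) = carr (dbar_ker A d1 d2 n)"
  using hmap_surj homD(1)[OF hmap_hom] by blast

lemma main_map:
  "rmod_hom (Htot A d1 d2 n) (donor_lim A d1 d2 n) (\<lambda>X. kmap (hmap X))
   \<and> (\<lambda>X. kmap (hmap X)) ` carr (Htot A d1 d2 n) = carr (donor_lim A d1 d2 n)
   \<and> mker (Htot A d1 d2 n) (donor_lim A d1 d2 n) (\<lambda>X. kmap (hmap X)) = PB A d1 d2 n"
proof (intro conjI)
  show "rmod_hom (Htot A d1 d2 n) (donor_lim A d1 d2 n) (\<lambda>X. kmap (hmap X))"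
    using hom_comp[OF hmap_hom] K_DL_iso unfolding rmod_iso_def by blast
  show "(\<lambda>X. kmap (hmap X)) ` carr (Htot A d1 d2 n) = carr (donor_lim A d1 d2 n)"
    using hmap_image kmap_image' by (metis image_image)
  have "kmap (hmap X) = mzero (donor_lim A d1 d2 n) \<longleftrightarrow> hmap X = mzero (dbar_ker A d1 d2 n)"
    if X: "X \<in> carr (Htot A d1 d2 n)" for X
  proof -
    have "hmap X \<in> carr (donprod A d1 d2 n)" using hmap_image X K_donprod by blast
    moreover have "mzero (dbar_ker A d1 d2 n) \<in> carr (donprod A d1 d2 n)"
      using don_mod by (simp add: dbar_ker_def donprod_def)
    ultimately show ?thesis using kmap_kmap kmap_zero by metis
  qed
  then show "mker (Htot A d1 d2 n) (donor_lim A d1 d2 n) (\<lambda>X. kmap (hmap X)) = PB A d1 d2 n"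
    using hmap_kernel unfolding mker_def by auto
qed

definition rlmap where "rlmap Z = (\<lambda>i. ext_v A d1 d2 (i - 1) (n - i + 1) (Z (i - 1)))"

lemma DL_prev: "Z \<in> carr (donor_lim A d1 d2 n) \<Longrightarrow> Z (i - 1) \<in> carr (donor A d1 d2 (i - 1) (n - i + 1))"
  using DL_elem(1)[of Z "i - 1"] unfolding idx_prev .

lemma RL_elem:
  assumes Y: "Y \<in> carr (receptor_lim A d1 d2 n)"
  shows "Y i \<in> carr (receptor A d1 d2 i (n - i + 1))" "Y i = psi i (Y (i + 1))"
proof -
  have YY: "(\<forall>i. Y i \<in> carr (receptor A d1 d2 i (n - i + 1))) \<and> (\<forall>i. Y i = psi i (Y (i + 1)))"
    using Y unfolding RL_carr by (rule CollectD)
  then show "Y i \<in> carr (receptor A d1 d2 i (n - i + 1))" "Y i = psi i (Y (i + 1))" by (blast, blast)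
qed

lemma rlmap_in:
  assumes Z: "Z \<in> carr (donor_lim A d1 d2 n)"
  shows "rlmap Z \<in> carr (receptor_lim A d1 d2 n)"
proof -
  have c: "rlmap Z i \<in> carr (receptor A d1 d2 i (n - i + 1))" for i
    unfolding rlmap_def using ext_v_in[OF DL_prev[OF Z]] by simp
  have "rlmap Z i = psi i (rlmap Z (i + 1))" for i
  proof -
    have e: "n - (i + 1) + 1 = n - i" by simp
    have "psi i (rlmap Z (i + 1)) = ext_h A d1 d2 i (n - i) (Z i)"
      unfolding rlmap_def e using inv_ext_v[OF DL_elem(1)[OF Z]] by simp
    then show ?thesis unfolding rlmap_def using DL_compat[OF Z] by simp
  qed
  then show ?thesis unfolding RL_carr using c by blast
qed

text \<open>Conversely, a compatible family of receptors is lifted row by row through the inverse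
  isomorphisms.\<close>
lemma rlmap_surj:
  assumes Y: "Y \<in> carr (receptor_lim A d1 d2 n)"
  shows "Y \<in> rlmap ` carr (donor_lim A d1 d2 n)"
proof -
  define Z where "Z j = the_inv_into (carr (donor A d1 d2 j (n - j))) (ext_v A d1 d2 j (n - j)) (Y (j + 1))" for j
  have Y1: "Y (j + 1) \<in> carr (receptor A d1 d2 (j + 1) (n - j))" for j
  proof -
    have e: "n - (j + 1) + 1 = n - j" by simp
    show ?thesis using RL_elem(1)[OF Y, of "j + 1"] unfolding e .
  qed
  have Zc: "Z j \<in> carr (donor A d1 d2 j (n - j))" for j unfolding Z_def using inv_ext_v_in[OF Y1] .
  have Zv: "ext_v A d1 d2 j (n - j) (Z j) = Y (j + 1)" for j unfolding Z_def using ext_v_inv[OF Y1] .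
  have "Z j = phi j (Z (j + 1))" for j
  proof -
    have "Y (j + 1) = psi (j + 1) (Y (j + 1 + 1))" using RL_elem(2)[OF Y] .
    then have "Y (j + 1) = ext_h A d1 d2 (j + 1) (n - (j + 1)) (Z (j + 1))" unfolding Z_def by simp
    then show ?thesis using compat_iff[of Z j, OF Zc Zc] Zv unfolding idx_next by simp
  qed
  then have ZD: "Z \<in> carr (donor_lim A d1 d2 n)" unfolding DL_carr using Zc by blast
  have "rlmap Z = Y"
  proof
    fix i
    have "rlmap Z i = ext_v A d1 d2 (i - 1) (n - (i - 1)) (Z (i - 1))" unfolding rlmap_def idx_prev by simp
    also have "\<dots> = Y (i - 1 + 1)" by (rule Zv)
    finally show "rlmap Z i = Y i" by simp
  qed
  then show ?thesis using ZD by blast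
qed

lemma DL_RL_iso: "rmod_iso (donor_lim A d1 d2 n) (receptor_lim A d1 d2 n) rlmap"
proof -
  have "rmod_iso (sub_rmod (prod_rmod (\<lambda>i. donor A d1 d2 i (n - i))) (carr (donor_lim A d1 d2 n)))
      (sub_rmod (prod_rmod (\<lambda>i. receptor A d1 d2 i (n - i + 1))) (carr (receptor_lim A d1 d2 n)))
      (\<lambda>Z i. ext_v A d1 d2 (i - 1) (n - i + 1) (Z (i - 1)))"
  proof (rule levelwise_iso[where \<sigma> = "\<lambda>i. i - 1"])
    show "rmod_hom (donor A d1 d2 (i - 1) (n - (i - 1))) (receptor A d1 d2 i (n - i + 1)) (ext_v A d1 d2 (i - 1) (n - i + 1))" for i
      using ext_v_hom[of "i - 1" "n - i + 1"] unfolding idx_prev by simp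
    show "inj_on (ext_v A d1 d2 (i - 1) (n - i + 1)) (carr (donor A d1 d2 (i - 1) (n - (i - 1))))" for i
      using ext_v_inj[of "i - 1" "n - i + 1"] unfolding idx_prev .
    show "surj (\<lambda>i::int. i - 1)" by (metis add_diff_cancel surj_def)
    show "carr (donor_lim A d1 d2 n) \<subseteq> carr (prod_rmod (\<lambda>i. donor A d1 d2 i (n - i)))"
      unfolding DL_carr by auto
    show "(\<lambda>Z i. ext_v A d1 d2 (i - 1) (n - i + 1) (Z (i - 1))) ` carr (donor_lim A d1 d2 n) = carr (receptor_lim A d1 d2 n)"
      using rlmap_in rlmap_surj unfolding rlmap_def by blast
  qed
  then show ?thesis using DL_sub RL_sub unfolding rlmap_def by simp
qed

end

section \<open>Peekaboo elements as a cokernel\<close>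

context col_exact_dc_deg begin

lemma intra_hom: "rmod_hom (recprod A d1 d2 n) (Htot A d1 d2 n) (intramural A d1 d2 n)"
  unfolding rmod_hom_def
proof (intro conjI ballI allI)
  show "intramural A d1 d2 n ` carr (recprod A d1 d2 n) \<subseteq> carr (Htot A d1 d2 n)"
    using yrep H_in rcycle_cyc by auto
next
  fix Y Y' assume Y: "Y \<in> carr (recprod A d1 d2 n)" and Y': "Y' \<in> carr (recprod A d1 d2 n)"
  let ?y = "yrep Y" and ?y' = "yrep Y'"
  let ?z = "madd (tot A n) ?y ?y'"
  have zb: "rcycle ?z" unfolding rcycle_def
    using rm_add[OF tot_mod rcycle_t[OF yrep(1)[OF Y]] rcycle_t[OF yrep(1)[OF Y']]]
      rcycle_SR[OF yrep(1)[OF Y]] rcycle_SR[OF yrep(1)[OF Y']] by (simp add: tot_add SR_add)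
  have "madd (recprod A d1 d2 n) Y Y' = (\<lambda>i. rq i (n - i) (?z i))"
    using yrep(2)[OF Y] yrep(2)[OF Y'] rcycle_SR[OF yrep(1)[OF Y]] rcycle_SR[OF yrep(1)[OF Y']]
    by (metis (no_types, lifting) recprod_add rec_add tot_add)
  then have "intramural A d1 d2 n (madd (recprod A d1 d2 n) Y Y') = hq n ?z" using intra_rq[OF zb] by simp
  also have "\<dots> = madd (Htot A d1 d2 n) (hq n ?y) (hq n ?y')" using H_add rcycle_cyc yrep(1) Y Y' by simp
  finally show "intramural A d1 d2 n (madd (recprod A d1 d2 n) Y Y') = madd (Htot A d1 d2 n) (intramural A d1 d2 n Y) (intramural A d1 d2 n Y')"
    using yrep(3)[OF Y] yrep(3)[OF Y'] by simp
next
  fix a Y assume Y: "Y \<in> carr (recprod A d1 d2 n)"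
  let ?y = "yrep Y"
  let ?z = "msmul (tot A n) a ?y"
  have zb: "rcycle ?z" unfolding rcycle_def
    using rm_smul[OF tot_mod rcycle_t[OF yrep(1)[OF Y]]] rcycle_SR[OF yrep(1)[OF Y]] by (simp add: tot_smul SR_smul)
  have "msmul (recprod A d1 d2 n) a Y = (\<lambda>i. rq i (n - i) (?z i))"
    using yrep(2)[OF Y] rcycle_SR[OF yrep(1)[OF Y]] by (metis (no_types, lifting) recprod_smul rec_smul tot_smul)
  then have "intramural A d1 d2 n (msmul (recprod A d1 d2 n) a Y) = hq n ?z" using intra_rq[OF zb] by simp
  also have "\<dots> = msmul (Htot A d1 d2 n) a (hq n ?y)" using H_smul rcycle_cyc yrep(1) Y by simp
  finally show "intramural A d1 d2 n (msmul (recprod A d1 d2 n) a Y) = msmul (Htot A d1 d2 n) a (intramural A d1 d2 n Y)"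
    using yrep(3)[OF Y] by simp
qed

lemma dbar_prev_dq:
  assumes w: "w \<in> carr (tot A (n - 1))" and ws: "\<And>i. w i \<in> SD i (n - i - 1)"
  shows "dbar A d1 d2 (n - 1) (\<lambda>i. dq i (n - 1 - i) (w i)) = (\<lambda>i. rq i (n - i) (totd A d1 d2 (n - 1) w i))"
    "rcycle (totd A d1 d2 (n - 1) w)"
proof -
  have e: "\<And>i. n - 1 - i + 1 = n - i" by simp
  have ws': "\<And>i. w i \<in> SD i (n - 1 - i)" using ws unfolding idx_deg_pred .
  show "dbar A d1 d2 (n - 1) (\<lambda>i. dq i (n - 1 - i) (w i)) = (\<lambda>i. rq i (n - i) (totd A d1 d2 (n - 1) w i))"
    using dbar_dq[OF w ws'] unfolding e by blast
  show "rcycle (totd A d1 d2 (n - 1) w)"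
    unfolding rcycle_def using totd_SR[OF w ws'] totd_in[OF w] unfolding e by simp
qed

text \<open>A receptor family has intramural image zero iff its representing rcycle is a total
  boundary; such a boundary comes from a chain with components in the donor numerators,
  because its vertical differentials vanish.\<close>
lemma intra_zero_dbar:
  assumes Y: "Y \<in> carr (recprod A d1 d2 n)" and Y0: "intramural A d1 d2 n Y = mzero (Htot A d1 d2 n)"
  shows "Y \<in> dbar A d1 d2 (n - 1) ` carr (donprod A d1 d2 (n - 1))"
proof -
  let ?y = "yrep Y"
  have yb: "rcycle ?y" using yrep(1)[OF Y] .
  have "hq n ?y = hq n (mzero (tot A n))" using Y0 yrep(3)[OF Y] H_zero by simp
  then have "?y \<in> boundaries A d1 d2 n"
    using H_eq[OF rcycle_cyc[OF yb] submodD(2)[OF cyc_sub]] rcycle_t[OF yb] tot_mod by simp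
  then obtain w where w: "w \<in> carr (tot A (n - 1))" "?y = totd A d1 d2 (n - 1) w" unfolding boundaries_def by auto
  have ws: "w i \<in> SD i (n - i - 1)" for i
  proof -
    have wi: "w i \<in> carr (A i (n - i - 1))" using tot_ing[OF w(1), of "n - i - 1" i] by simp
    have wp: "w (i - 1) \<in> carr (A (i - 1) (n - i))" using tot_ing[OF w(1), of "n - i" "i - 1"] by simp
    have "mzero (A (i + 1) (n - i)) = d1 i (n - i) (?y i)" using SR_d1[OF rcycle_SR[OF yb]] by simp
    also have "\<dots> = d1 i (n - i) (d2 i (n - i - 1) (w i))"
      unfolding w(2) bnd_comp[OF w(1)] using d2_in_idx[OF wi] wp d11'[OF wp] by (simp add: d1_add d1_smul)
    finally have "d1 i (n - i - 1 + 1) (d2 i (n - i - 1) (w i)) = mzero (A (i + 1) (n - i - 1 + 1))" unfolding idx_next_back by simp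
    then show ?thesis unfolding SD_def using wi by simp
  qed
  have X: "(\<lambda>i. dq i (n - 1 - i) (w i)) \<in> carr (donprod A d1 d2 (n - 1))"
    unfolding donprod_carr idx_deg_pred using ws don_in by simp
  have "dbar A d1 d2 (n - 1) (\<lambda>i. dq i (n - 1 - i) (w i)) = Y"
    using dbar_prev_dq(1)[OF w(1) ws] yrep(2)[OF Y] w(2) by simp
  then show ?thesis using X by blast
qed

lemma dbar_intra_zero:
  assumes X: "X \<in> carr (donprod A d1 d2 (n - 1))"
  shows "dbar A d1 d2 (n - 1) X \<in> carr (recprod A d1 d2 n)"
    "intramural A d1 d2 n (dbar A d1 d2 (n - 1) X) = mzero (Htot A d1 d2 n)"
proof -
  have Xi: "\<And>i. X i \<in> carr (donor A d1 d2 i (n - i - 1))" using X unfolding donprod_carr idx_deg_pred by simp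
  define w where "w i = (SOME x. x \<in> X i)" for i
  have ws: "\<And>i. w i \<in> SD i (n - i - 1)" and wq: "\<And>i. dq i (n - i - 1) (w i) = X i"
    using don_rep[OF Xi] unfolding w_def by auto
  have wt: "w \<in> carr (tot A (n - 1))" unfolding tot_in idx_deg_pred using ws SDc by blast
  have Yeq: "dbar A d1 d2 (n - 1) X = (\<lambda>i. rq i (n - i) (totd A d1 d2 (n - 1) w i))"
    using dbar_prev_dq(1)[OF wt ws] wq unfolding idx_deg_pred by simp
  have bb: "rcycle (totd A d1 d2 (n - 1) w)" using dbar_prev_dq(2)[OF wt ws] .
  show "dbar A d1 d2 (n - 1) X \<in> carr (recprod A d1 d2 n)"
    unfolding recprod_carr Yeq using rcycle_SR[OF bb] rec_in by simp
  have bB: "totd A d1 d2 (n - 1) w \<in> boundaries A d1 d2 n" unfolding boundaries_def using wt by simp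
  have "intramural A d1 d2 n (dbar A d1 d2 (n - 1) X) = hq n (totd A d1 d2 (n - 1) w)"
    unfolding Yeq using intra_rq[OF bb] .
  also have "\<dots> = hq n (mzero (tot A n))"
    using H_eqI[OF rcycle_cyc[OF bb] submodD(2)[OF cyc_sub]] bB rcycle_t[OF bb] tot_mod by simp
  finally show "intramural A d1 d2 n (dbar A d1 d2 (n - 1) X) = mzero (Htot A d1 d2 n)" using H_zero by simp
qed

lemma intra_kernel:
  "{Y \<in> carr (recprod A d1 d2 n). intramural A d1 d2 n Y = mzero (Htot A d1 d2 n)}
   = dbar A d1 d2 (n - 1) ` carr (donprod A d1 d2 (n - 1))"
  using intra_zero_dbar dbar_intra_zero by blast

text \<open>By the first isomorphism theorem for the intramural map, PB is the cokernel of dbar.\<close>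
lemma coker_iso: "\<exists>f. rmod_iso (sub_rmod (Htot A d1 d2 n) (PB A d1 d2 n)) (dbar_coker A d1 d2 n) f"
  using first_iso[OF recprod_mod H_mod intra_hom] unfolding intra_kernel PB_intra[symmetric] dbar_coker_def .

end

theorem corollary6p6:
  fixes A :: "int \<Rightarrow> int \<Rightarrow> ('r::ring_1, 'm) rmod"
    and d1 d2 :: "int \<Rightarrow> int \<Rightarrow> 'm \<Rightarrow> 'm"
    and n :: int
  assumes "double_complex A d1 d2"
    and "columns_exact A d1"
  shows "(\<forall>i. rmod_iso (donor A d1 d2 i (n - i)) (receptor A d1 d2 (i + 1) (n - i)) (ext_v A d1 d2 i (n - i)))
    \<and> (\<exists>g. rmod_hom (Htot A d1 d2 n) (donor_lim A d1 d2 n) g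
           \<and> g ` carr (Htot A d1 d2 n) = carr (donor_lim A d1 d2 n)
           \<and> mker (Htot A d1 d2 n) (donor_lim A d1 d2 n) g = PB A d1 d2 n)
    \<and> (\<exists>f. rmod_iso (donor_lim A d1 d2 n) (receptor_lim A d1 d2 n) f)
    \<and> (\<exists>f. rmod_iso (donor_lim A d1 d2 n) (dbar_ker A d1 d2 n) f)
    \<and> PB A d1 d2 n = intramural A d1 d2 n ` carr (recprod A d1 d2 n)
    \<and> (\<exists>f. rmod_iso (sub_rmod (Htot A d1 d2 n) (PB A d1 d2 n)) (dbar_coker A d1 d2 n) f)"
proof -
  interpret col_exact_dc_deg A d1 d2 n
    by unfold_locales (use assms in auto)
  show ?thesis
    using ext_v_iso main_map DL_RL_iso DL_K_iso PB_intra coker_iso by blast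
qed

end
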